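(* Let $\Gamma$ be a finite multiset of formulas and $G$ a formula, and suppose $G\supset\bot,\Gamma\longrightarrow G$ has an $\mathbf{I}$-proof satisfying one of the following restrictions on rule usage: (1) no $\forall$-R rule is used; (2) no $\lor$-R rule is used or no $\lor$-L rule is used, and, in addition, either no $\exists$-R rule is used or no $\lor$-L and no $\exists$-L rules are used; (3) no $\forall$-L and no $\supset$-R rules are used. Then $G\supset\bot,\Gamma\longrightarrow G$ has a uniform proof. Furthermore, this characterization is complete: for each way of violating all three restrictions there is a sequent of the form $G\supset\bot,\Gamma\longrightarrow G$ with such a violating $\mathbf{I}$-proof but no uniform proof; concretely, for each $Y\in\{\forall\text{-L},\supset\text{-R}\}$ there is such a sequent whose $\mathbf{I}$-proof uses rules of each of the kinds $\forall$-R, $\lor$-R, $\lor$-L, $Y$, and for each $Y\in\{\forall\text{-L},\supset\text{-R}\}$ and $Z\in\{\lor\text{-L},\exists\text{-L}\}$ there is such a sequent whose $\mathbf{I}$-proof uses rules of each of the kinds $\forall$-R, $\exists$-R, $Z$, $Y$.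
   Context: Formulas are first-order formulas built from atomic formulas and the logical constants $\top$, $\bot$ (not counted as atomic) using $\land,\lor,\supset,\forall,\exists$; $\neg A$ abbreviates $A\supset\bot$; $B[t/x]$ is capture-avoiding substitution of term $t$ for free $x$ in $B$. A sequent $\Gamma\longrightarrow\Delta$ is a pair of finite multisets of formulas; $B,\Gamma$ denotes $\Gamma$ with an extra occurrence of $B$. A sequent is an axiom if $\top\in\Delta$ or some formula that is $\bot$ or atomic occurs in both $\Gamma$ and $\Delta$. Writing premises $\Rightarrow$ conclusion, the rules are all instances of: contr-L: $B,B,\Gamma\longrightarrow\Delta\Rightarrow B,\Gamma\longrightarrow\Delta$; contr-R: $\Gamma\longrightarrow\Delta,B,B\Rightarrow\Gamma\longrightarrow\Delta,B$; $\bot$-R: $\Gamma\longrightarrow\Delta,\bot\Rightarrow\Gamma\longrightarrow\Delta,D$; $\land$-L: $B,\Gamma\longrightarrow\Delta\Rightarrow B\land D,\Gamma\longrightarrow\Delta$ and $D,\Gamma\longrightarrow\Delta\Rightarrow B\land D,\Gamma\longrightarrow\Delta$; $\lor$-L: $B,\Gamma\longrightarrow\Delta$ and $D,\Gamma\longrightarrow\Delta\Rightarrow B\lor D,\Gamma\longrightarrow\Delta$; $\land$-R: $\Gamma\longrightarrow\Delta,B$ and $\Gamma\longrightarrow\Delta,D\Rightarrow\Gamma\longrightarrow\Delta,B\land D$; $\lor$-R: $\Gamma\longrightarrow\Delta,B\Rightarrow\Gamma\longrightarrow\Delta,B\lor D$ and $\Gamma\longrightarrow\Delta,D\Rightarrow\Gamma\longrightarrow\Delta,B\lor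 D$; $\supset$-L: $\Gamma\longrightarrow\Delta,B$ and $D,\Gamma\longrightarrow\Theta\Rightarrow B\supset D,\Gamma\longrightarrow\Delta,\Theta$; $\supset$-R: $B,\Gamma\longrightarrow\Delta,D\Rightarrow\Gamma\longrightarrow\Delta,B\supset D$; $\forall$-L: $B[t/x],\Gamma\longrightarrow\Delta\Rightarrow\forall x B,\Gamma\longrightarrow\Delta$; $\exists$-R: $\Gamma\longrightarrow\Delta,B[t/x]\Rightarrow\Gamma\longrightarrow\Delta,\exists x B$ ($t$ any term); $\exists$-L: $B[c/x],\Gamma\longrightarrow\Delta\Rightarrow\exists x B,\Gamma\longrightarrow\Delta$; $\forall$-R: $\Gamma\longrightarrow\Delta,B[c/x]\Rightarrow\Gamma\longrightarrow\Delta,\forall x B$, where the constant $c$ does not occur in the conclusion. A $\mathbf{C}$-proof is a finite tree of sequents with axioms at the leaves, each internal node being the conclusion of a rule instance whose premises are its children. An $\mathbf{I}$-proof is a $\mathbf{C}$-proof in which every sequent has exactly one formula in its succedent. A uniform proof ($\mathbf{O}$-proof) is an $\mathbf{I}$-proof in which any sequent that has a non-atomic formula distinct from $\bot$ in its succedent occurs only as the conclusion of an inference rule that introduces the top-level logical symbol of that formula. A rule "is used" if some instance of that schema occurs in the proof. *)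

theory Defs
  imports Main "HOL-Library.Multiset"
begin

section \<open>First-order syntax (locally nameless: bound variables as de Bruijn indices)\<close>

text \<open>Function symbols and predicate symbols are natural numbers (a countably infinite
signature, every symbol usable at every arity). A constant is a 0-ary function symbol
application Fn c []. Free variables of the object language behave exactly like constants
in this calculus (no rule substitutes for them), so they are represented as constants.\<close>

datatype tm = Bnd nat | Fn nat "tm list"

datatype fm =
    Atom nat "tm list"
  | Top
  | Bot
  | And fm fm
  | Or fm fm
  | Imp fm fm
  | All fm
  | Ex fm

definition Neg :: "fm \<Rightarrow> fm" where "Neg A = Imp A Bot"

primrec closed_tm :: "nat \<Rightarrow> tm \<Rightarrow> bool" where
  "closed_tm d (Bnd i) = (i < d)"
| "closed_tm d (Fn f ts) = list_all (closed_tm d) ts"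

primrec closed_fm :: "nat \<Rightarrow> fm \<Rightarrow> bool" where
  "closed_fm d (Atom p ts) = list_all (closed_tm d) ts"
| "closed_fm d Top = True"
| "closed_fm d Bot = True"
| "closed_fm d (And A B) = (closed_fm d A \<and> closed_fm d B)"
| "closed_fm d (Or A B) = (closed_fm d A \<and> closed_fm d B)"
| "closed_fm d (Imp A B) = (closed_fm d A \<and> closed_fm d B)"
| "closed_fm d (All A) = closed_fm (Suc d) A"
| "closed_fm d (Ex A) = closed_fm (Suc d) A"

definition wff :: "fm \<Rightarrow> bool" where "wff A = closed_fm 0 A"

text \<open>Instantiation of bound index k by a closed term t; B[t/x] for the body B of a quantifier
is inst_fm 0 t B.\<close>
primrec inst_tm :: "nat \<Rightarrow> tm \<Rightarrow> tm \<Rightarrow> tm" where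
  "inst_tm k t (Bnd i) = (if i = k then t else Bnd i)"
| "inst_tm k t (Fn f ts) = Fn f (map (inst_tm k t) ts)"

primrec inst_fm :: "nat \<Rightarrow> tm \<Rightarrow> fm \<Rightarrow> fm" where
  "inst_fm k t (Atom p ts) = Atom p (map (inst_tm k t) ts)"
| "inst_fm k t Top = Top"
| "inst_fm k t Bot = Bot"
| "inst_fm k t (And A B) = And (inst_fm k t A) (inst_fm k t B)"
| "inst_fm k t (Or A B) = Or (inst_fm k t A) (inst_fm k t B)"
| "inst_fm k t (Imp A B) = Imp (inst_fm k t A) (inst_fm k t B)"
| "inst_fm k t (All A) = All (inst_fm (Suc k) t A)"
| "inst_fm k t (Ex A) = Ex (inst_fm (Suc k) t A)"

fun consts_tm :: "tm \<Rightarrow> nat set" where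
  "consts_tm (Bnd i) = {}"
| "consts_tm (Fn f ts) = (if ts = [] then {f} else {}) \<union> (\<Union>t\<in>set ts. consts_tm t)"

primrec consts_fm :: "fm \<Rightarrow> nat set" where
  "consts_fm (Atom p ts) = (\<Union>t\<in>set ts. consts_tm t)"
| "consts_fm Top = {}"
| "consts_fm Bot = {}"
| "consts_fm (And A B) = consts_fm A \<union> consts_fm B"
| "consts_fm (Or A B) = consts_fm A \<union> consts_fm B"
| "consts_fm (Imp A B) = consts_fm A \<union> consts_fm B"
| "consts_fm (All A) = consts_fm A"
| "consts_fm (Ex A) = consts_fm A"

type_synonym sequent = "fm multiset \<times> fm multiset"

definition consts_seq :: "sequent \<Rightarrow> nat set" where
  "consts_seq s = (\<Union>A\<in>set_mset (fst s). consts_fm A) \<union> (\<Union>A\<in>set_mset (snd s). consts_fm A)"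

definition is_atomic :: "fm \<Rightarrow> bool" where
  "is_atomic A = (\<exists>p ts. A = Atom p ts)"

definition is_axiom :: "sequent \<Rightarrow> bool" where
  "is_axiom s = (Top \<in># snd s \<or> (\<exists>A. (A = Bot \<or> is_atomic A) \<and> A \<in># fst s \<and> A \<in># snd s))"

datatype rule = Axiom | ContrL | ContrR | BotR | AndL | OrL | AndR | OrR | ImpL | ImpR
  | AllL | ExR | ExL | AllR

fun rinst :: "rule \<Rightarrow> sequent list \<Rightarrow> sequent \<Rightarrow> bool" where
  "rinst Axiom ps c = (ps = [] \<and> is_axiom c)"
| "rinst ContrL ps c = (\<exists>B \<Gamma> \<Delta>. ps = [(add_mset B (add_mset B \<Gamma>), \<Delta>)] \<and> c = (add_mset B \<Gamma>, \<Delta>))"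
| "rinst ContrR ps c = (\<exists>B \<Gamma> \<Delta>. ps = [(\<Gamma>, add_mset B (add_mset B \<Delta>))] \<and> c = (\<Gamma>, add_mset B \<Delta>))"
| "rinst BotR ps c = (\<exists>D \<Gamma> \<Delta>. ps = [(\<Gamma>, add_mset Bot \<Delta>)] \<and> c = (\<Gamma>, add_mset D \<Delta>))"
| "rinst AndL ps c = (\<exists>B D \<Gamma> \<Delta>. (ps = [(add_mset B \<Gamma>, \<Delta>)] \<or> ps = [(add_mset D \<Gamma>, \<Delta>)])
      \<and> c = (add_mset (And B D) \<Gamma>, \<Delta>))"
| "rinst OrL ps c = (\<exists>B D \<Gamma> \<Delta>. ps = [(add_mset B \<Gamma>, \<Delta>), (add_mset D \<Gamma>, \<Delta>)]
      \<and> c = (add_mset (Or B D) \<Gamma>, \<Delta>))"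
| "rinst AndR ps c = (\<exists>B D \<Gamma> \<Delta>. ps = [(\<Gamma>, add_mset B \<Delta>), (\<Gamma>, add_mset D \<Delta>)]
      \<and> c = (\<Gamma>, add_mset (And B D) \<Delta>))"
| "rinst OrR ps c = (\<exists>B D \<Gamma> \<Delta>. (ps = [(\<Gamma>, add_mset B \<Delta>)] \<or> ps = [(\<Gamma>, add_mset D \<Delta>)])
      \<and> c = (\<Gamma>, add_mset (Or B D) \<Delta>))"
| "rinst ImpL ps c = (\<exists>B D \<Gamma> \<Delta> \<Theta>. ps = [(\<Gamma>, add_mset B \<Delta>), (add_mset D \<Gamma>, \<Theta>)]
      \<and> c = (add_mset (Imp B D) \<Gamma>, \<Delta> + \<Theta>))"
| "rinst ImpR ps c = (\<exists>B D \<Gamma> \<Delta>. ps = [(add_mset B \<Gamma>, add_mset D \<Delta>)]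
      \<and> c = (\<Gamma>, add_mset (Imp B D) \<Delta>))"
| "rinst AllL ps c = (\<exists>B t \<Gamma> \<Delta>. closed_tm 0 t \<and> ps = [(add_mset (inst_fm 0 t B) \<Gamma>, \<Delta>)]
      \<and> c = (add_mset (All B) \<Gamma>, \<Delta>))"
| "rinst ExR ps c = (\<exists>B t \<Gamma> \<Delta>. closed_tm 0 t \<and> ps = [(\<Gamma>, add_mset (inst_fm 0 t B) \<Delta>)]
      \<and> c = (\<Gamma>, add_mset (Ex B) \<Delta>))"
| "rinst ExL ps c = (\<exists>B x \<Gamma> \<Delta>. ps = [(add_mset (inst_fm 0 (Fn x []) B) \<Gamma>, \<Delta>)]
      \<and> c = (add_mset (Ex B) \<Gamma>, \<Delta>) \<and> x \<notin> consts_seq c)"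
| "rinst AllR ps c = (\<exists>B x \<Gamma> \<Delta>. ps = [(\<Gamma>, add_mset (inst_fm 0 (Fn x []) B) \<Delta>)]
      \<and> c = (\<Gamma>, add_mset (All B) \<Delta>) \<and> x \<notin> consts_seq c)"

text \<open>A node records its sequent, the rule schema of which it is the conclusion
(Axiom for leaves), and its subproofs.\<close>
datatype ptree = PT sequent rule "ptree list"

primrec root :: "ptree \<Rightarrow> sequent" where
  "root (PT s r ps) = s"

fun cproof :: "ptree \<Rightarrow> bool" where
  "cproof (PT s r ps) = (rinst r (map root ps) s \<and> (\<forall>p\<in>set ps. cproof p))"

fun all_seqs :: "ptree \<Rightarrow> sequent set" where
  "all_seqs (PT s r ps) = insert s (\<Union>p\<in>set ps. all_seqs p)"

fun uses :: "rule \<Rightarrow> ptree \<Rightarrow> bool" where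
  "uses r (PT s r' ps) = (r = r' \<or> (\<exists>p\<in>set ps. uses r p))"

definition iproof :: "ptree \<Rightarrow> bool" where
  "iproof p = (cproof p \<and> (\<forall>s\<in>all_seqs p. size (snd s) = 1))"

text \<open>Uniformity condition at a node: if the (unique) succedent formula is non-atomic and
distinct from Bot, the node must be the conclusion of the rule introducing its top-level
symbol (for Top there is no such rule, so such a node must be an axiom leaf).\<close>
fun intro_ok :: "rule \<Rightarrow> fm \<Rightarrow> bool" where
  "intro_ok r (Atom p ts) = True"
| "intro_ok r Bot = True"
| "intro_ok r Top = False"
| "intro_ok r (And A B) = (r = AndR)"
| "intro_ok r (Or A B) = (r = OrR)"
| "intro_ok r (Imp A B) = (r = ImpR)"
| "intro_ok r (All A) = (r = AllR)"
| "intro_ok r (Ex A) = (r = ExR)"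

fun uniform_nodes :: "ptree \<Rightarrow> bool" where
  "uniform_nodes (PT s r ps) =
     ((r \<noteq> Axiom \<longrightarrow> (\<forall>A. A \<in># snd s \<longrightarrow> intro_ok r A)) \<and> (\<forall>p\<in>set ps. uniform_nodes p))"

definition uproof :: "ptree \<Rightarrow> bool" where
  "uproof p = (iproof p \<and> uniform_nodes p)"

definition goal_seq :: "fm \<Rightarrow> fm multiset \<Rightarrow> sequent" where
  "goal_seq G \<Gamma> = (add_mset (Neg G) \<Gamma>, {#G#})"

definition restricted :: "ptree \<Rightarrow> bool" where
  "restricted p =
     (\<not> uses AllR p
      \<or> ((\<not> uses OrR p \<or> \<not> uses OrL p) \<and> (\<not> uses ExR p \<or> (\<not> uses OrL p \<and> \<not> uses ExL p)))
      \<or> (\<not> uses AllL p \<and> \<not> uses ImpR p))"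

end

theory Submission
  imports Defs
begin

text \<open>Proof trees are first translated into a height-bounded calculus with a set of antecedents and
  a single succedent, whose uniform variant applies left rules and \<open>\<bottom>\<close>-R to atomic goals and
  \<open>\<bottom>\<close> only.

  Under restriction (2) a derivation becomes uniform by inverting right rules: \<open>\<and>\<close>, \<open>\<supset>\<close> and
  \<open>\<forall>\<close> are always invertible, and \<open>\<or>\<close> and \<open>\<exists>\<close> are invertible in the absence of the excluded
  rule combinations.

  Under restrictions (1) and (3) the hypothesis \<open>G \<supset> \<bottom>\<close> does the work. Call a goal \<open>C\<close>
  reached from \<open>G\<close> \<^emph>\<open>yielding\<close> if a uniform proof of \<open>C\<close> gives one of \<open>G\<close>. Once \<open>G\<close> has
  a uniform proof, \<open>\<supset>\<close>-L on \<open>G \<supset> \<bottom>\<close> proves every goal, so the premises of a left rule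
  applied below a yielding goal \<open>C\<close> prove all atomic goals, and the left rule can be postponed
  until right rules have decomposed \<open>C\<close>. This needs the eigenvariables of \<open>\<forall>\<close>-R to stay out
  of the antecedent, which holds if \<open>\<forall>\<close>-R is absent, or if \<open>\<forall>\<close>-L and \<open>\<supset>\<close>-R, the only rules
  that could bring them there, are absent.

  Each counterexample is refuted by an invariant of uniform proof search.\<close>

section \<open>Renaming constants\<close>

primrec rename_tm :: "(nat \<Rightarrow> nat) \<Rightarrow> tm \<Rightarrow> tm" where
  "rename_tm \<sigma> (Bnd i) = Bnd i"
| "rename_tm \<sigma> (Fn f ts) = Fn (if ts = [] then \<sigma> f else f) (map (rename_tm \<sigma>) ts)"

primrec rename_fm :: "(nat \<Rightarrow> nat) \<Rightarrow> fm \<Rightarrow> fm" where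
  "rename_fm \<sigma> (Atom p ts) = Atom p (map (rename_tm \<sigma>) ts)"
| "rename_fm \<sigma> Top = Top"
| "rename_fm \<sigma> Bot = Bot"
| "rename_fm \<sigma> (And A B) = And (rename_fm \<sigma> A) (rename_fm \<sigma> B)"
| "rename_fm \<sigma> (Or A B) = Or (rename_fm \<sigma> A) (rename_fm \<sigma> B)"
| "rename_fm \<sigma> (Imp A B) = Imp (rename_fm \<sigma> A) (rename_fm \<sigma> B)"
| "rename_fm \<sigma> (All A) = All (rename_fm \<sigma> A)"
| "rename_fm \<sigma> (Ex A) = Ex (rename_fm \<sigma> A)"

primrec fm_size :: "fm \<Rightarrow> nat" where
  "fm_size (Atom p ts) = 1"
| "fm_size Top = 1"
| "fm_size Bot = 1"
| "fm_size (And A B) = Suc (fm_size A + fm_size B)"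
| "fm_size (Or A B) = Suc (fm_size A + fm_size B)"
| "fm_size (Imp A B) = Suc (fm_size A + fm_size B)"
| "fm_size (All A) = Suc (fm_size A)"
| "fm_size (Ex A) = Suc (fm_size A)"

lemma fm_size_inst_fm [simp]: "fm_size (inst_fm k t A) = fm_size A"
  by (induction A arbitrary: k) auto

lemma rename_inst_tm: "rename_tm \<sigma> (inst_tm k t s) = inst_tm k (rename_tm \<sigma> t) (rename_tm \<sigma> s)"
  by (induction s) auto

lemma rename_inst_fm: "rename_fm \<sigma> (inst_fm k t A) = inst_fm k (rename_tm \<sigma> t) (rename_fm \<sigma> A)"
  by (induction A arbitrary: k) (auto simp: rename_inst_tm)

lemma consts_rename_tm: "consts_tm (rename_tm \<sigma> t) = \<sigma> ` consts_tm t"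
  by (induction t) (auto simp: image_UN)

lemma rename_tm_cong: "(\<And>x. x \<in> consts_tm t \<Longrightarrow> \<sigma> x = \<tau> x) \<Longrightarrow> rename_tm \<sigma> t = rename_tm \<tau> t"
  by (induction t) auto

lemma rename_fm_cong: "(\<And>x. x \<in> consts_fm A \<Longrightarrow> \<sigma> x = \<tau> x) \<Longrightarrow> rename_fm \<sigma> A = rename_fm \<tau> A"
  by (induction A) (auto intro: rename_tm_cong)

lemma rename_tm_ident [simp]: "rename_tm (\<lambda>x. x) t = t"
  by (induction t) (auto intro: map_idI)

lemma rename_fm_ident [simp]: "rename_fm (\<lambda>x. x) A = A"
  by (induction A) (auto intro: map_idI)

lemma closed_rename_tm: "closed_tm d t \<Longrightarrow> closed_tm d (rename_tm \<sigma> t)"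
  by (induction t) (auto simp: list_all_iff)

lemma consts_inst_tm: "consts_tm (inst_tm k t s) \<subseteq> consts_tm s \<union> consts_tm t"
  by (induction s) auto

lemma consts_inst_fm: "consts_fm (inst_fm k t A) \<subseteq> consts_fm A \<union> consts_tm t"
  by (induction A arbitrary: k) (use consts_inst_tm in fastforce)+

lemma consts_inst_fm_const: "consts_fm (inst_fm 0 (Fn x []) A) \<subseteq> insert x (consts_fm A)"
  using consts_inst_fm[of 0 "Fn x []" A] by simp

lemma finite_consts_tm [simp]: "finite (consts_tm t)"
  by (induction t) auto

lemma finite_consts_fm [simp]: "finite (consts_fm A)"
  by (induction A) auto

lemma rename_fm_upd: "x \<notin> consts_fm A \<Longrightarrow> rename_fm (\<sigma>(x := y)) A = rename_fm \<sigma> A"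
  by (rule rename_fm_cong) auto

lemma rename_inst_fm_upd:
  "x \<notin> consts_fm A \<Longrightarrow>
   rename_fm (\<sigma>(x := y)) (inst_fm 0 (Fn x []) A) = inst_fm 0 (Fn y []) (rename_fm \<sigma> A)"
  by (simp add: rename_inst_fm rename_fm_upd)

definition consts_fms :: "fm set \<Rightarrow> nat set" where
  "consts_fms S = (\<Union>A\<in>S. consts_fm A)"

lemma consts_fms_insert [simp]: "consts_fms (insert A S) = consts_fm A \<union> consts_fms S"
  and consts_fms_Un [simp]: "consts_fms (S \<union> T) = consts_fms S \<union> consts_fms T"
  and consts_fms_empty [simp]: "consts_fms {} = {}"
  by (auto simp: consts_fms_def)

lemma finite_consts_fms [simp]: "finite S \<Longrightarrow> finite (consts_fms S)"
  by (auto simp: consts_fms_def)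

lemma consts_fm_subset_consts_fms: "A \<in> S \<Longrightarrow> consts_fm A \<subseteq> consts_fms S"
  by (auto simp: consts_fms_def)

lemma rename_fms_upd: "x \<notin> consts_fms S \<Longrightarrow> rename_fm (\<sigma>(x := y)) ` S = rename_fm \<sigma> ` S"
  by (auto simp: consts_fms_def rename_fm_upd image_iff)

lemma fresh_const:
  fixes X :: "nat set"
  assumes "finite X"
  obtains x where "x \<notin> X"
  using ex_new_if_finite[OF infinite_UNIV_nat assms] by blast

definition atomic_or_bot :: "fm \<Rightarrow> bool" where
  "atomic_or_bot C = (is_atomic C \<or> C = Bot)"

lemma atomic_or_bot_rename [simp]: "atomic_or_bot (rename_fm \<sigma> C) = atomic_or_bot C"
  by (cases C) (auto simp: atomic_or_bot_def is_atomic_def)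

section \<open>Height-bounded derivations\<close>

text \<open>Single-succedent sequents with a set of antecedents, so contraction is implicit; \<open>n\<close> bounds
  the height and \<open>R\<close> the rules used. When \<open>uni\<close> holds, left rules and \<open>\<bottom>\<close>-R apply only to
  atomic goals and \<open>\<bottom>\<close>, which is the uniformity discipline.\<close>

inductive der :: "bool \<Rightarrow> rule set \<Rightarrow> nat \<Rightarrow> fm set \<Rightarrow> fm \<Rightarrow> bool" where
  axTop: "der uni R n S Top"
| axAtom: "C \<in> S \<Longrightarrow> atomic_or_bot C \<Longrightarrow> der uni R n S C"
| botR: "BotR \<in> R \<Longrightarrow> (uni \<longrightarrow> atomic_or_bot C) \<Longrightarrow> der uni R n S Bot \<Longrightarrow> der uni R (Suc n) S C"
| andL1: "AndL \<in> R \<Longrightarrow> (uni \<longrightarrow> atomic_or_bot C) \<Longrightarrow> And A B \<in> S \<Longrightarrow>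
    der uni R n (insert A S) C \<Longrightarrow> der uni R (Suc n) S C"
| andL2: "AndL \<in> R \<Longrightarrow> (uni \<longrightarrow> atomic_or_bot C) \<Longrightarrow> And A B \<in> S \<Longrightarrow>
    der uni R n (insert B S) C \<Longrightarrow> der uni R (Suc n) S C"
| orL: "OrL \<in> R \<Longrightarrow> (uni \<longrightarrow> atomic_or_bot C) \<Longrightarrow> Or A B \<in> S \<Longrightarrow>
    der uni R n (insert A S) C \<Longrightarrow> der uni R n (insert B S) C \<Longrightarrow> der uni R (Suc n) S C"
| impL: "ImpL \<in> R \<Longrightarrow> (uni \<longrightarrow> atomic_or_bot C) \<Longrightarrow> Imp A B \<in> S \<Longrightarrow>
    der uni R n S A \<Longrightarrow> der uni R n (insert B S) C \<Longrightarrow> der uni R (Suc n) S C"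
| allL: "AllL \<in> R \<Longrightarrow> (uni \<longrightarrow> atomic_or_bot C) \<Longrightarrow> All A \<in> S \<Longrightarrow> closed_tm 0 t \<Longrightarrow>
    der uni R n (insert (inst_fm 0 t A) S) C \<Longrightarrow> der uni R (Suc n) S C"
| exL: "ExL \<in> R \<Longrightarrow> (uni \<longrightarrow> atomic_or_bot C) \<Longrightarrow> Ex A \<in> S \<Longrightarrow> x \<notin> consts_fms S \<Longrightarrow>
    x \<notin> consts_fm C \<Longrightarrow> der uni R n (insert (inst_fm 0 (Fn x []) A) S) C \<Longrightarrow> der uni R (Suc n) S C"
| andR: "AndR \<in> R \<Longrightarrow> der uni R n S A \<Longrightarrow> der uni R n S B \<Longrightarrow> der uni R (Suc n) S (And A B)"
| orR1: "OrR \<in> R \<Longrightarrow> der uni R n S A \<Longrightarrow> der uni R (Suc n) S (Or A B)"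
| orR2: "OrR \<in> R \<Longrightarrow> der uni R n S B \<Longrightarrow> der uni R (Suc n) S (Or A B)"
| impR: "ImpR \<in> R \<Longrightarrow> der uni R n (insert A S) B \<Longrightarrow> der uni R (Suc n) S (Imp A B)"
| allR: "AllR \<in> R \<Longrightarrow> x \<notin> consts_fms S \<Longrightarrow> x \<notin> consts_fm A \<Longrightarrow>
    der uni R n S (inst_fm 0 (Fn x []) A) \<Longrightarrow> der uni R (Suc n) S (All A)"
| exR: "ExR \<in> R \<Longrightarrow> closed_tm 0 t \<Longrightarrow> der uni R n S (inst_fm 0 t A) \<Longrightarrow> der uni R (Suc n) S (Ex A)"

lemma der_Suc: "der uni R n S C \<Longrightarrow> der uni R (Suc n) S C"
  by (induction rule: der.induct) (auto intro: der.intros)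

lemma der_mono_height: "der uni R n S C \<Longrightarrow> n \<le> m \<Longrightarrow> der uni R m S C"
  by (induction m) (auto intro: der_Suc simp: le_Suc_eq)

lemma der_mono_rules: "der uni R n S C \<Longrightarrow> R \<subseteq> R' \<Longrightarrow> der uni R' n S C"
  by (induction rule: der.induct) (auto intro: der.intros)

lemma der_rename:
  "der uni R n S C \<Longrightarrow> rename_fm \<sigma> ` S \<subseteq> S' \<Longrightarrow> finite S' \<Longrightarrow> der uni R n S' (rename_fm \<sigma> C)"
proof (induction arbitrary: \<sigma> S' rule: der.induct)
  case (axAtom C S uni R n)
  then show ?case by (intro der.axAtom) auto
next
  case (exL R uni C A S x n)
  obtain y where y: "y \<notin> consts_fms S' \<union> consts_fm (rename_fm \<sigma> C)"
    using fresh_const[of "consts_fms S' \<union> consts_fm (rename_fm \<sigma> C)"] exL.prems by auto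
  have "x \<notin> consts_fm A"
    using exL.hyps(3,4) consts_fm_subset_consts_fms by fastforce
  then have "rename_fm (\<sigma>(x := y)) ` insert (inst_fm 0 (Fn x []) A) S
      \<subseteq> insert (inst_fm 0 (Fn y []) (rename_fm \<sigma> A)) S'"
    using exL.prems(1) exL.hyps(4) by (auto simp: rename_inst_fm_upd rename_fms_upd)
  then have "der uni R n (insert (inst_fm 0 (Fn y []) (rename_fm \<sigma> A)) S') (rename_fm \<sigma> C)"
    using exL.IH exL.prems(2) exL.hyps(5) by (metis finite_insert rename_fm_upd)
  moreover have "Ex (rename_fm \<sigma> A) \<in> S'"
    using exL.hyps(3) exL.prems(1) by force
  ultimately show ?case
    using y exL.hyps(1,2) by (intro der.exL) auto
next
  case (allR R x S A uni n)
  obtain y where y: "y \<notin> consts_fms S' \<union> consts_fm (rename_fm \<sigma> A)"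
    using fresh_const[of "consts_fms S' \<union> consts_fm (rename_fm \<sigma> A)"] allR.prems by auto
  have "rename_fm (\<sigma>(x := y)) ` S \<subseteq> S'"
    using allR.prems(1) allR.hyps(2) by (simp add: rename_fms_upd)
  then have "der uni R n S' (inst_fm 0 (Fn y []) (rename_fm \<sigma> A))"
    using allR.IH allR.prems(2) allR.hyps(3) by (metis rename_inst_fm_upd)
  then show ?case
    using y allR.hyps(1) by (auto intro: der.allR)
next
  case (andL1 R uni C A B S n)
  then show ?case
    by (intro der.andL1[of _ _ _ "rename_fm \<sigma> A" "rename_fm \<sigma> B"]) (auto simp: image_subset_iff)
next
  case (andL2 R uni C A B S n)
  then show ?case
    by (intro der.andL2[of _ _ _ "rename_fm \<sigma> A" "rename_fm \<sigma> B"]) (auto simp: image_subset_iff)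
next
  case (orL R uni C A B S n)
  then show ?case
    by (intro der.orL[of _ _ _ "rename_fm \<sigma> A" "rename_fm \<sigma> B"]) (auto simp: image_subset_iff)
next
  case (impL R uni C A B S n)
  then show ?case
    by (intro der.impL[of _ _ _ "rename_fm \<sigma> A" "rename_fm \<sigma> B"]) (auto simp: image_subset_iff)
next
  case (allL R uni C A S t n)
  then show ?case
    by (intro der.allL[of _ _ _ "rename_fm \<sigma> A" _ "rename_tm \<sigma> t"])
      (auto simp: image_subset_iff closed_rename_tm rename_inst_fm)
next
  case (impR R uni n A S B)
  then show ?case by (auto intro!: der.impR simp: image_subset_iff)
next
  case (exR R t uni n S A)
  then show ?case
    by (auto intro!: der.exR[of _ "rename_tm \<sigma> t"] simp: closed_rename_tm rename_inst_fm[symmetric])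
qed (auto intro: der.intros)

lemma der_weaken: "der uni R n S C \<Longrightarrow> S \<subseteq> S' \<Longrightarrow> finite S' \<Longrightarrow> der uni R n S' C"
  using der_rename[of uni R n S C "\<lambda>x. x" S'] by simp

lemma der_rename_premise:
  assumes "der uni R n (insert P S) C" "x \<notin> consts_fms S" "x \<notin> consts_fm C" "finite S"
  shows "der uni R n (insert (rename_fm ((\<lambda>z. z)(x := y)) P) S) C"
  using der_rename[OF assms(1), of "(\<lambda>z. z)(x := y)" "insert (rename_fm ((\<lambda>z. z)(x := y)) P) S"]
    assms(2-)
  by (simp add: rename_fms_upd rename_fm_upd)

lemma der_rename_eigen:
  assumes "der uni R n (insert (inst_fm 0 (Fn x []) A) S) C"
    and "x \<notin> consts_fms S" "x \<notin> consts_fm A" "x \<notin> consts_fm C" "finite S"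
  shows "der uni R n (insert (inst_fm 0 (Fn y []) A) S) C"
  using der_rename_premise[OF assms(1,2,4,5), of y] assms(3) by (simp add: rename_inst_fm_upd)

lemma der_rename_eigen_goal:
  assumes "der uni R n S (inst_fm 0 (Fn x []) A)" "x \<notin> consts_fms S" "x \<notin> consts_fm A" "finite S"
  shows "der uni R n S (inst_fm 0 (Fn y []) A)"
  using der_rename[OF assms(1), of "(\<lambda>z. z)(x := y)" S] assms(2-)
  by (simp add: rename_fms_upd rename_inst_fm_upd)

section \<open>Uniform provability\<close>

definition uprov :: "fm set \<Rightarrow> fm \<Rightarrow> bool" where
  "uprov S C = (\<exists>n. der True UNIV n S C)"

lemma uprov_weaken: "uprov S C \<Longrightarrow> S \<subseteq> S' \<Longrightarrow> finite S' \<Longrightarrow> uprov S' C"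
  unfolding uprov_def using der_weaken by blast

lemma uprov_ax: "C \<in> S \<Longrightarrow> atomic_or_bot C \<Longrightarrow> uprov S C"
  and uprov_Top: "uprov S Top"
  and uprov_botR: "atomic_or_bot C \<Longrightarrow> uprov S Bot \<Longrightarrow> uprov S C"
  and uprov_orR1: "uprov S A \<Longrightarrow> uprov S (Or A B)"
  and uprov_orR2: "uprov S B \<Longrightarrow> uprov S (Or A B)"
  and uprov_impR: "uprov (insert A S) B \<Longrightarrow> uprov S (Imp A B)"
  and uprov_allR: "x \<notin> consts_fms S \<Longrightarrow> x \<notin> consts_fm A \<Longrightarrow> uprov S (inst_fm 0 (Fn x []) A) \<Longrightarrow>
    uprov S (All A)"
  and uprov_exR: "closed_tm 0 t \<Longrightarrow> uprov S (inst_fm 0 t A) \<Longrightarrow> uprov S (Ex A)"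
  and uprov_andL1: "atomic_or_bot C \<Longrightarrow> And A B \<in> S \<Longrightarrow> uprov (insert A S) C \<Longrightarrow> uprov S C"
  and uprov_andL2: "atomic_or_bot C \<Longrightarrow> And A B \<in> S \<Longrightarrow> uprov (insert B S) C \<Longrightarrow> uprov S C"
  and uprov_allL: "atomic_or_bot C \<Longrightarrow> All A \<in> S \<Longrightarrow> closed_tm 0 t \<Longrightarrow>
    uprov (insert (inst_fm 0 t A) S) C \<Longrightarrow> uprov S C"
  and uprov_exL: "atomic_or_bot C \<Longrightarrow> Ex A \<in> S \<Longrightarrow> x \<notin> consts_fms S \<Longrightarrow> x \<notin> consts_fm C \<Longrightarrow>
    uprov (insert (inst_fm 0 (Fn x []) A) S) C \<Longrightarrow> uprov S C"
  unfolding uprov_def by (blast intro: der.intros)+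

lemma uprov_andR: "uprov S A \<Longrightarrow> uprov S B \<Longrightarrow> uprov S (And A B)"
  and uprov_orL: "atomic_or_bot C \<Longrightarrow> Or A B \<in> S \<Longrightarrow> uprov (insert A S) C \<Longrightarrow>
    uprov (insert B S) C \<Longrightarrow> uprov S C"
  and uprov_impL: "atomic_or_bot C \<Longrightarrow> Imp A B \<in> S \<Longrightarrow> uprov S A \<Longrightarrow> uprov (insert B S) C \<Longrightarrow>
    uprov S C"
  unfolding uprov_def by (meson der.intros der_mono_height UNIV_I max.cobounded1 max.cobounded2)+

text \<open>The constants in \<open>K\<close> stay fresh throughout: eigenvariables avoid them, and a fresh
  constant witnesses existential goals.\<close>

lemma uprov_if_atomic_goals_avoiding:
  assumes "finite S" "finite K" "consts_fms S \<inter> K = {}" "consts_fm C \<inter> K = {}"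
    and atomic: "\<And>S' a. S \<subseteq> S' \<Longrightarrow> finite S' \<Longrightarrow> consts_fms S' \<inter> K = {} \<Longrightarrow>
      consts_fm a \<inter> K = {} \<Longrightarrow> atomic_or_bot a \<Longrightarrow> uprov S' a"
  shows "uprov S C"
  using assms(1,3,4) atomic
proof (induction "fm_size C" arbitrary: C S rule: less_induct)
  case less
  note IH = less.hyps and S = less.prems(1,2) and C = less.prems(3) and atomic = less.prems(4)
  have IH_same: "uprov S D" if "fm_size D < fm_size C" "consts_fm D \<inter> K = {}" for D
    using IH[OF that(1) S that(2)] atomic by blast
  show ?case
  proof (cases C)
    case (Atom p ts)
    then show ?thesis using S C atomic by (simp add: atomic_or_bot_def is_atomic_def)
  next
    case Bot
    then show ?thesis using S C atomic by (simp add: atomic_or_bot_def)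
  next
    case Top
    then show ?thesis by (simp add: uprov_Top)
  next
    case (And A B)
    then show ?thesis using C by (simp add: uprov_andR IH_same Int_Un_distrib2)
  next
    case (Or A B)
    then show ?thesis using C by (simp add: uprov_orR1 IH_same Int_Un_distrib2)
  next
    case (Imp A B)
    have "uprov (insert A S) B"
      using IH[of B "insert A S"] S C atomic Imp by (auto simp: Int_Un_distrib2)
    then show ?thesis using Imp by (simp add: uprov_impR)
  next
    case (All A)
    obtain x where x: "x \<notin> K \<union> consts_fms S \<union> consts_fm A"
      using fresh_const[of "K \<union> consts_fms S \<union> consts_fm A"] S assms(2) by auto
    have "uprov S (inst_fm 0 (Fn x []) A)"
      using All x C consts_inst_fm_const[of x A] by (intro IH_same) auto
    then show ?thesis using All x by (auto intro: uprov_allR)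
  next
    case (Ex A)
    obtain x where x: "x \<notin> K"
      using fresh_const[OF assms(2)] by blast
    have "uprov S (inst_fm 0 (Fn x []) A)"
      using Ex x C consts_inst_fm_const[of x A] by (intro IH_same) auto
    then show ?thesis using Ex by (auto intro: uprov_exR[of "Fn x []"])
  qed
qed

lemma uprov_if_atomic_goals:
  "finite S \<Longrightarrow> (\<And>S' a. S \<subseteq> S' \<Longrightarrow> finite S' \<Longrightarrow> atomic_or_bot a \<Longrightarrow> uprov S' a) \<Longrightarrow> uprov S C"
  by (rule uprov_if_atomic_goals_avoiding[of S "{}"]) auto

lemma uprov_explosion:
  assumes "finite S" "Imp G Bot \<in> S" "uprov S G"
  shows "uprov S C"
proof (rule uprov_if_atomic_goals[OF assms(1)])
  fix S' a assume S': "S \<subseteq> S'" "finite S'" and a: "atomic_or_bot a"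
  have "uprov (insert Bot S') a"
    by (rule uprov_botR[OF a uprov_ax]) (auto simp: atomic_or_bot_def)
  then show "uprov S' a"
    using uprov_weaken[OF assms(3) S'] S'(1) assms(2) a by (blast intro: uprov_impL)
qed

lemma uprov_Bot_elim: "finite S \<Longrightarrow> uprov S Bot \<Longrightarrow> uprov S C"
  by (rule uprov_if_atomic_goals) (blast intro: uprov_botR[OF _ uprov_weaken])+

section \<open>Restrictions (1) and (3): restarting with the negated goal\<close>

text \<open>\<open>E\<close> collects the eigenvariables of the \<open>\<forall>\<close>-R steps passed so far; the extensions \<open>Y\<close> of
  the context must avoid them.\<close>

definition yields :: "fm \<Rightarrow> nat set \<Rightarrow> fm set \<Rightarrow> fm \<Rightarrow> bool" where
  "yields G E S C =
     (\<forall>Y. finite Y \<longrightarrow> consts_fms Y \<inter> E = {} \<longrightarrow> uprov (S \<union> Y) C \<longrightarrow> uprov (S \<union> Y) G)"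

lemma yields_refl: "yields G E S G"
  unfolding yields_def by blast

lemma yields_extend: "yields G E S C \<Longrightarrow> finite Y \<Longrightarrow> consts_fms Y \<inter> E = {} \<Longrightarrow> yields G E (S \<union> Y) C"
  unfolding yields_def by (metis Int_Un_distrib2 Un_assoc Un_empty consts_fms_Un finite_UnI)

lemma yields_insert: "yields G E S C \<Longrightarrow> consts_fm P \<inter> E = {} \<Longrightarrow> yields G E (insert P S) C"
  using yields_extend[of G E S C "{P}"] by simp

lemma yields_uprov: "yields G E S C \<Longrightarrow> uprov S C \<Longrightarrow> uprov S G"
  unfolding yields_def by (drule spec[of _ "{}"]) simp

lemma yields_backward:
  "yields G E S C \<Longrightarrow>
   (\<And>Y. finite Y \<Longrightarrow> consts_fms Y \<inter> E = {} \<Longrightarrow> uprov (S \<union> Y) D \<Longrightarrow> uprov (S \<union> Y) C) \<Longrightarrow>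
   yields G E S D"
  unfolding yields_def by blast

lemma yields_andR2: "finite S \<Longrightarrow> yields G E S (And A B) \<Longrightarrow> uprov S A \<Longrightarrow> yields G E S B"
  by (erule yields_backward) (auto intro: uprov_andR uprov_weaken)

lemma yields_impR:
  assumes "finite S" "yields G E S (Imp A B)"
  shows "yields G E (insert A S) B"
  unfolding yields_def
proof (intro allI impI)
  fix Y
  assume Y: "finite Y" "consts_fms Y \<inter> E = {}" "uprov (insert A S \<union> Y) B"
  then have "uprov (S \<union> Y) G"
    using assms(2) unfolding yields_def by (simp add: uprov_impR)
  then show "uprov (insert A S \<union> Y) G"
    by (rule uprov_weaken) (use assms(1) Y in auto)
qed

lemma yields_allR:
  assumes "yields G E S (All A)" "x \<notin> consts_fms S" "x \<notin> consts_fm A"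
  shows "yields G (insert x E) S (inst_fm 0 (Fn x []) A)"
  unfolding yields_def
proof (intro allI impI)
  fix Y
  assume Y: "finite Y" "consts_fms Y \<inter> insert x E = {}" "uprov (S \<union> Y) (inst_fm 0 (Fn x []) A)"
  then have "uprov (S \<union> Y) (All A)"
    using assms(2,3) by (intro uprov_allR[of x]) auto
  then show "uprov (S \<union> Y) G"
    using assms(1) Y unfolding yields_def by blast
qed

text \<open>This is where \<open>G \<supset> \<bottom>\<close> is used: a premise of a left rule that yields \<open>G\<close> proves every
  goal, so the left rule can be reapplied below each atomic goal into which right rules
  decompose \<open>C\<close>.\<close>

lemma uprov_by_left_rule:
  assumes "finite S" "Imp G Bot \<in> S" "yields G E S C"
    and prems: "\<forall>P\<in>Ps. consts_fm P \<inter> E = {} \<and> uprov (insert P S) C"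
    and "finite K" "consts_fms S \<inter> K = {}" "consts_fm C \<inter> K = {}"
    and rule: "\<And>S' a. S \<subseteq> S' \<Longrightarrow> finite S' \<Longrightarrow> consts_fms S' \<inter> K = {} \<Longrightarrow>
      consts_fm a \<inter> K = {} \<Longrightarrow> atomic_or_bot a \<Longrightarrow> \<forall>P\<in>Ps. uprov (insert P S') a \<Longrightarrow> uprov S' a"
  shows "uprov S C"
proof (rule uprov_if_atomic_goals_avoiding[OF assms(1,5,6,7)])
  fix S' a
  assume S': "S \<subseteq> S'" "finite S'" "consts_fms S' \<inter> K = {}"
    and a: "consts_fm a \<inter> K = {}" "atomic_or_bot a"
  have "uprov (insert P S') a" if "P \<in> Ps" for P
  proof -
    have "uprov (insert P S) G"
      using yields_uprov[OF yields_insert[OF assms(3)]] prems that by blast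
    then have "uprov (insert P S') G"
      by (rule uprov_weaken) (use S' in auto)
    then show ?thesis
      by (rule uprov_explosion[rotated 2]) (use S' assms(2) in auto)
  qed
  then show "uprov S' a"
    using rule[OF S' a] by blast
qed

text \<open>Without \<open>\<forall>\<close>-L and \<open>\<supset>\<close>-R no eigenvariable of a \<open>\<forall>\<close>-R step can enter the antecedent.\<close>

definition eigen_safe :: "rule set \<Rightarrow> nat set \<Rightarrow> fm set \<Rightarrow> bool" where
  "eigen_safe R E S = ((AllR \<notin> R \<and> E = {}) \<or> (AllL \<notin> R \<and> ImpR \<notin> R \<and> consts_fms S \<inter> E = {}))"

lemma eigen_safe_subformula: "eigen_safe R E S \<Longrightarrow> consts_fm P \<subseteq> consts_fms S \<Longrightarrow> consts_fm P \<inter> E = {}"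
  unfolding eigen_safe_def by blast

lemma eigen_safe_insert: "eigen_safe R E S \<Longrightarrow> consts_fm P \<inter> E = {} \<Longrightarrow> eigen_safe R E (insert P S)"
  unfolding eigen_safe_def by auto

lemma eigen_safe_Un: "eigen_safe R E S \<Longrightarrow> consts_fms Y \<inter> E = {} \<Longrightarrow> eigen_safe R E (S \<union> Y)"
  unfolding eigen_safe_def by auto

definition uniformizes :: "fm \<Rightarrow> rule set \<Rightarrow> nat \<Rightarrow> bool" where
  "uniformizes G R n =
     (\<forall>S C E. der False R n S C \<longrightarrow> finite S \<longrightarrow> Imp G Bot \<in> S \<longrightarrow> finite E \<longrightarrow> eigen_safe R E S \<longrightarrow>
        yields G E S C \<longrightarrow> uprov S C)"

lemma uniformizesD:
  "uniformizes G R n \<Longrightarrow> der False R n S C \<Longrightarrow> finite S \<Longrightarrow> Imp G Bot \<in> S \<Longrightarrow> finite E \<Longrightarrow>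
   eigen_safe R E S \<Longrightarrow> yields G E S C \<Longrightarrow> uprov S C"
  unfolding uniformizes_def by blast

context
  fixes G :: fm and R :: "rule set" and m :: nat and S :: "fm set" and E :: "nat set"
  assumes IH: "uniformizes G R m"
    and fin_S: "finite S" and refutes: "Imp G Bot \<in> S" and fin_E: "finite E"
    and safe: "eigen_safe R E S"
begin

lemma uprov_premise:
  "der False R m (insert P S) C \<Longrightarrow> consts_fm P \<inter> E = {} \<Longrightarrow> yields G E S C \<Longrightarrow>
   uprov (insert P S) C"
  by (rule uniformizesD[OF IH])
    (use fin_S refutes fin_E eigen_safe_insert[OF safe] yields_insert in auto)

lemma uprov_premise_subformula:
  "der False R m (insert P S) C \<Longrightarrow> consts_fm P \<subseteq> consts_fms S \<Longrightarrow> yields G E S C \<Longrightarrow>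
   uprov (insert P S) C"
  using uprov_premise eigen_safe_subformula[OF safe] by blast

lemma uprov_botR_case:
  assumes "der False R m S Bot" "yields G E S C"
  shows "uprov S C"
proof -
  have "yields G E S Bot"
    by (rule yields_backward[OF assms(2)]) (use fin_S in \<open>simp add: uprov_Bot_elim\<close>)
  then show ?thesis
    using fin_S uprov_Bot_elim uniformizesD[OF IH assms(1) fin_S refutes fin_E safe] by blast
qed

lemma uprov_andL_case:
  assumes "And A B \<in> S" "P \<in> {A, B}" "der False R m (insert P S) C" "yields G E S C"
  shows "uprov S C"
proof (rule uprov_by_left_rule[OF fin_S refutes assms(4), where Ps = "{P}" and K = "{}"])
  have "consts_fm P \<subseteq> consts_fms S"
    using assms(1,2) consts_fm_subset_consts_fms by fastforce
  then show "\<forall>P'\<in>{P}. consts_fm P' \<inter> E = {} \<and> uprov (insert P' S) C"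
    using assms(3,4) uprov_premise_subformula eigen_safe_subformula[OF safe] by blast
qed (use assms(1,2) in \<open>auto intro: uprov_andL1 uprov_andL2\<close>)

lemma uprov_orL_case:
  assumes "Or A B \<in> S" "der False R m (insert A S) C" "der False R m (insert B S) C"
    "yields G E S C"
  shows "uprov S C"
proof (rule uprov_by_left_rule[OF fin_S refutes assms(4), where Ps = "{A, B}" and K = "{}"])
  have "consts_fm A \<subseteq> consts_fms S" "consts_fm B \<subseteq> consts_fms S"
    using assms(1) consts_fm_subset_consts_fms by fastforce+
  then show "\<forall>P\<in>{A, B}. consts_fm P \<inter> E = {} \<and> uprov (insert P S) C"
    using assms(2-4) uprov_premise_subformula eigen_safe_subformula[OF safe] by blast
qed (use assms(1) in \<open>auto intro: uprov_orL\<close>)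

lemma uprov_impL_case:
  assumes "Imp A B \<in> S" "der False R m S A" "der False R m (insert B S) C" "yields G E S C"
  shows "uprov S C"
proof -
  have "consts_fm B \<subseteq> consts_fms S"
    using consts_fm_subset_consts_fms[OF assms(1)] by simp
  then have B: "consts_fm B \<inter> E = {}"
    by (rule eigen_safe_subformula[OF safe])
  have lift: "uprov (S \<union> Y) C"
    if Y: "finite Y" "consts_fms Y \<inter> E = {}" and A: "uprov (S \<union> Y) A" for Y
  proof -
    have fin: "finite (S \<union> Y)"
      using fin_S Y(1) by simp
    have d: "der False R m (insert B (S \<union> Y)) C"
      by (rule der_weaken[OF assms(3)]) (use fin in auto)
    have prem: "uprov (insert B (S \<union> Y)) C"
      by (rule uniformizesD[OF IH d _ _ fin_E eigen_safe_insert[OF eigen_safe_Un[OF safe Y(2)] B]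
            yields_insert[OF yields_extend[OF assms(4) Y] B]])
        (use fin refutes in auto)
    show ?thesis
    proof (rule uprov_by_left_rule[OF fin UnI1[OF refutes] yields_extend[OF assms(4) Y],
          where Ps = "{B}" and K = "{}", rotated 4])
      fix S' a
      assume S': "S \<union> Y \<subseteq> S'" "finite S'" and a: "atomic_or_bot a"
        and B': "\<forall>P\<in>{B}. uprov (insert P S') a"
      show "uprov S' a"
        by (rule uprov_impL[OF a, of A B]) (use assms(1) S' B' uprov_weaken[OF A S'] in auto)
    qed (use B prem in auto)
  qed
  txt \<open>Once \<open>A\<close> is provable the \<open>\<supset>\<close>-L step can be replayed, so \<open>A\<close> too yields \<open>G\<close>.\<close>
  have "yields G E S A"
    using assms(4) lift by (rule yields_backward)
  then have "uprov S A"
    by (rule uniformizesD[OF IH assms(2) fin_S refutes fin_E safe])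
  then show ?thesis
    using lift[of "{}"] by simp
qed

lemma uprov_allL_case:
  assumes "AllL \<in> R" "All A \<in> S" "closed_tm 0 t" "der False R m (insert (inst_fm 0 t A) S) C"
    "yields G E S C"
  shows "uprov S C"
proof -
  have "E = {}"
    using safe assms(1) by (simp add: eigen_safe_def)
  have prem: "uprov (insert (inst_fm 0 t A) S) C"
    using uprov_premise[OF assms(4) _ assms(5)] \<open>E = {}\<close> by simp
  show ?thesis
  proof (rule uprov_by_left_rule[OF fin_S refutes assms(5),
        where Ps = "{inst_fm 0 t A}" and K = "{}", rotated 4])
    fix S' a
    assume "S \<subseteq> S'" "atomic_or_bot a" "\<forall>P\<in>{inst_fm 0 t A}. uprov (insert P S') a"
    then show "uprov S' a"
      using assms(2,3) by (intro uprov_allL[of a A S' t]) auto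
  qed (use \<open>E = {}\<close> prem in auto)
qed

lemma uprov_exL_case:
  assumes "Ex A \<in> S" "x \<notin> consts_fms S" "x \<notin> consts_fm C"
    "der False R m (insert (inst_fm 0 (Fn x []) A) S) C" "yields G E S C"
  shows "uprov S C"
proof -
  have A: "consts_fm A \<subseteq> consts_fms S"
    using assms(1) consts_fm_subset_consts_fms by fastforce
  obtain y where y: "y \<notin> consts_fms S \<union> consts_fm C \<union> E"
    using fresh_const[of "consts_fms S \<union> consts_fm C \<union> E"] fin_S fin_E by auto
  have "der False R m (insert (inst_fm 0 (Fn y []) A) S) C"
    using der_rename_eigen[OF assms(4,2) _ assms(3) fin_S] assms(2) A by blast
  moreover have "consts_fm (inst_fm 0 (Fn y []) A) \<inter> E = {}"
    using consts_inst_fm_const[of y A] eigen_safe_subformula[OF safe A] y by auto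
  ultimately have prem: "uprov (insert (inst_fm 0 (Fn y []) A) S) C"
    using uprov_premise assms(5) by blast
  show ?thesis
  proof (rule uprov_by_left_rule[OF fin_S refutes assms(5),
        where Ps = "{inst_fm 0 (Fn y []) A}" and K = "{y}", rotated 4])
    fix S' a
    assume "S \<subseteq> S'" "consts_fms S' \<inter> {y} = {}" "consts_fm a \<inter> {y} = {}" "atomic_or_bot a"
      "\<forall>P\<in>{inst_fm 0 (Fn y []) A}. uprov (insert P S') a"
    then show "uprov S' a"
      using assms(1) by (intro uprov_exL[of a A S' y]) auto
  qed (use y \<open>consts_fm (inst_fm 0 (Fn y []) A) \<inter> E = {}\<close> prem in auto)
qed

lemma uprov_andR_case:
  assumes "der False R m S A" "der False R m S B" "yields G E S (And A B)"
  shows "uprov S (And A B)"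
proof -
  have lift: "uprov (S \<union> Y) B"
    if Y: "finite Y" "consts_fms Y \<inter> E = {}" and A: "uprov (S \<union> Y) A" for Y
  proof -
    have fin: "finite (S \<union> Y)"
      using fin_S Y(1) by simp
    have "yields G E (S \<union> Y) B"
      using yields_andR2[OF fin yields_extend[OF assms(3) Y] A] .
    then show ?thesis
      by (rule uniformizesD[OF IH der_weaken[OF assms(2) Un_upper1 fin] fin UnI1[OF refutes] fin_E
            eigen_safe_Un[OF safe Y(2)]])
  qed
  have "yields G E S A"
    by (rule yields_backward[OF assms(3)]) (simp add: lift uprov_andR)
  then have "uprov S A"
    by (rule uniformizesD[OF IH assms(1) fin_S refutes fin_E safe])
  then show ?thesis
    using lift[of "{}"] by (simp add: uprov_andR)
qed

lemma uprov_impR_case: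
  assumes "ImpR \<in> R" "der False R m (insert A S) B" "yields G E S (Imp A B)"
  shows "uprov S (Imp A B)"
proof -
  have "E = {}"
    using safe assms(1) by (simp add: eigen_safe_def)
  then have "uprov (insert A S) B"
    using fin_S refutes
    by (intro uniformizesD[OF IH assms(2) _ _ fin_E eigen_safe_insert[OF safe]
      yields_impR[OF fin_S assms(3)]])
      auto
  then show ?thesis
    by (rule uprov_impR)
qed

lemma uprov_allR_case:
  assumes "AllR \<in> R" "x \<notin> consts_fms S" "x \<notin> consts_fm A"
    "der False R m S (inst_fm 0 (Fn x []) A)" "yields G E S (All A)"
  shows "uprov S (All A)"
proof -
  have "eigen_safe R (insert x E) S"
    using safe assms(1,2) by (auto simp: eigen_safe_def)
  then have "uprov S (inst_fm 0 (Fn x []) A)"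
    using fin_E
    by (intro uniformizesD[OF IH assms(4) fin_S refutes _ _ yields_allR[OF assms(5,2,3)]]) auto
  then show ?thesis
    by (rule uprov_allR[OF assms(2,3)])
qed

lemma uprov_right_case:
  assumes "der False R m S D" "\<And>S'. uprov S' D \<Longrightarrow> uprov S' C" "yields G E S C"
  shows "uprov S C"
proof -
  have "yields G E S D"
    using assms(3) by (rule yields_backward) (use assms(2) in blast)
  then show ?thesis
    by (rule assms(2)[OF uniformizesD[OF IH assms(1) fin_S refutes fin_E safe]])
qed

end

lemma uniformizes_all: "uniformizes G R n"
proof (induction n)
  case 0
  show ?case
    unfolding uniformizes_def by (auto elim: der.cases simp: uprov_Top uprov_ax)
next
  case (Suc m)
  show ?case
    unfolding uniformizes_def
  proof (intro allI impI)
    fix S C E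
    assume der: "der False R (Suc m) S C" and yields: "yields G E S C"
      and ctx: "finite S" "Imp G Bot \<in> S" "finite E" "eigen_safe R E S"
    note step = Suc.IH ctx
    from der show "uprov S C"
    proof cases
      case axTop
      then show ?thesis by (simp add: uprov_Top)
    next
      case axAtom
      then show ?thesis by (simp add: uprov_ax)
    next
      case botR
      then show ?thesis using uprov_botR_case[OF step] yields by simp
    next
      case (andL1 A B)
      then show ?thesis using uprov_andL_case[OF step, of A B A] yields by simp
    next
      case (andL2 A B)
      then show ?thesis using uprov_andL_case[OF step, of A B B] yields by simp
    next
      case (orL A B)
      then show ?thesis using uprov_orL_case[OF step] yields by simp
    next
      case (impL A B)
      then show ?thesis using uprov_impL_case[OF step] yields by simp
    next
      case (allL A t)
      then show ?thesis using uprov_allL_case[OF step] yields by simp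
    next
      case (exL A x)
      then show ?thesis using uprov_exL_case[OF step] yields by simp
    next
      case (andR A B)
      then show ?thesis using uprov_andR_case[OF step] yields by simp
    next
      case (orR1 A B)
      then show ?thesis using uprov_right_case[OF step] yields uprov_orR1 by simp
    next
      case (orR2 B A)
      then show ?thesis using uprov_right_case[OF step] yields uprov_orR2 by simp
    next
      case (impR A B)
      then show ?thesis using uprov_impR_case[OF step] yields by simp
    next
      case (allR x A)
      then show ?thesis using uprov_allR_case[OF step] yields by simp
    next
      case (exR t A)
      then show ?thesis using uprov_right_case[OF step] yields uprov_exR by simp
    qed
  qed
qed

lemma uprov_if_der_refuted_goal:
  assumes "der False R n S G" "finite S" "Imp G Bot \<in> S" "AllR \<notin> R \<or> AllL \<notin> R \<and> ImpR \<notin> R"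
  shows "uprov S G"
  using uniformizes_all[of G R n] assms yields_refl[of G "{}" S]
  unfolding uniformizes_def eigen_safe_def by blast

section \<open>Restriction (2): inversion of right rules\<close>

lemma der_And_inv:
  assumes "der False R n S (And A B)"
  shows "der False R n S A \<and> der False R n S B"
  using assms
proof (induction False R n S "And A B" rule: der.induct)
  case (exL R A' S x n)
  then show ?case by (auto intro: der.exL)
qed (auto intro: der.intros der_Suc simp: atomic_or_bot_def is_atomic_def)

text \<open>Left rules hand the goal on to one premise, except \<open>\<or>\<close>-L, which hands it to two. So without
  \<open>\<or>\<close>-L the right rule that finally decomposes a disjunction or existential goal can be moved
  down to the root; for \<open>\<exists>\<close> also \<open>\<exists>\<close>-L must be absent, as its eigenvariable condition could be
  violated by the witness.\<close>

lemma der_Or_inv_no_OrL: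
  assumes "der False R n S (Or A B)" "OrL \<notin> R"
  shows "der False R n S A \<or> der False R n S B"
  using assms
proof (induction False R n S "Or A B" rule: der.induct)
  case (exL R A' S x n)
  then show ?case by (auto intro: der.exL)
qed (auto intro: der.intros der_Suc simp: atomic_or_bot_def is_atomic_def)

lemma der_Or_inv_no_OrR:
  assumes "der False R n S (Or A B)" "OrR \<notin> R"
  shows "der False R n S A"
  using assms
proof (induction False R n S "Or A B" rule: der.induct)
  case (exL R A' S x n)
  then show ?case by (auto intro: der.exL)
qed (auto intro: der.intros der_Suc simp: atomic_or_bot_def is_atomic_def)

lemma der_Ex_inv_no_OrL_ExL:
  assumes "der False R n S (Ex A)" "OrL \<notin> R" "ExL \<notin> R"
  shows "\<exists>t. closed_tm 0 t \<and> der False R n S (inst_fm 0 t A)"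
  using assms
proof (induction False R n S "Ex A" rule: der.induct)
  case (botR R n S)
  then show ?case by (intro exI[of _ "Fn 0 []"]) (auto intro: der.botR)
qed (auto intro: der.intros der_Suc simp: atomic_or_bot_def is_atomic_def)

lemma der_Imp_inv:
  assumes "der False R n S (Imp A B)" "finite S"
  shows "der False R n (insert A S) B"
  using assms
proof (induction False R n S "Imp A B" rule: der.induct)
  case (botR R n S)
  then show ?case using der_weaken[of False R n S Bot "insert A S"] by (auto intro: der.botR)
next
  case (andL1 R A' B' S n)
  then show ?case by (auto intro!: der.andL1[of _ _ _ A' B'] simp: insert_commute)
next
  case (andL2 R A' B' S n)
  then show ?case by (auto intro!: der.andL2[of _ _ _ A' B'] simp: insert_commute)
next
  case (orL R A' B' S n)
  then show ?case by (auto intro!: der.orL[of _ _ _ A' B'] simp: insert_commute)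
next
  case (impL R A' B' S n)
  then show ?case using der_weaken[of False R n S A' "insert A S"]
    by (auto intro!: der.impL[of _ _ _ A' B'] simp: insert_commute)
next
  case (allL R A' S t n)
  then show ?case by (auto intro!: der.allL[of _ _ _ A' _ t] simp: insert_commute)
next
  case (exL R A' S x n)
  then show ?case by (auto intro!: der.exL[of _ _ _ A' _ x] simp: insert_commute)
next
  case (impR R n S)
  then show ?case by (auto intro: der_Suc)
qed (auto simp: atomic_or_bot_def is_atomic_def)

lemma der_All_inv:
  assumes "der False R n S (All A)" "finite S" "x \<notin> consts_fms S" "x \<notin> consts_fm A"
  shows "der False R n S (inst_fm 0 (Fn x []) A)"
  using assms
proof (induction n arbitrary: S rule: less_induct)
  case (less n)
  note IH = less.IH and fin = less.prems(2) and x = less.prems(3,4)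
  have x_sub: "x \<notin> consts_fm P" if "Q \<in> S" "consts_fm P \<subseteq> consts_fm Q" for P Q
    using that x(1) consts_fm_subset_consts_fms by blast
  from less.prems(1) show ?case
  proof cases
    case (botR m)
    then show ?thesis by (auto intro: der.botR)
  next
    case (andL1 A' B' m)
    then show ?thesis using IH[of m "insert A' S"] fin x x_sub[of "And A' B'"]
      by (auto intro: der.andL1)
  next
    case (andL2 A' B' m)
    then show ?thesis using IH[of m "insert B' S"] fin x x_sub[of "And A' B'"]
      by (auto intro: der.andL2)
  next
    case (orL A' B' m)
    then show ?thesis
      using IH[of m "insert A' S"] IH[of m "insert B' S"] fin x x_sub[of "Or A' B'"]
      by (auto intro: der.orL)
  next
    case (impL A' B' m)
    then show ?thesis using IH[of m "insert B' S"] fin x x_sub[of "Imp A' B'"]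
      by (auto intro: der.impL)
  next
    case (allL A' t m)
    obtain y where y: "y \<notin> insert x (consts_fms S)"
      using fresh_const[of "insert x (consts_fms S)"] fin by auto
    let ?t = "rename_tm ((\<lambda>z. z)(x := y)) t"
    have xA': "x \<notin> consts_fm A'"
      using x_sub[OF allL(4)] by simp
    have "der False R m (insert (inst_fm 0 ?t A') S) (All A)"
      using der_rename_premise[OF allL(6) x(1) _ fin, of y] x(2) xA'
      by (simp add: rename_inst_fm rename_fm_upd)
    moreover have "x \<notin> consts_tm ?t"
      using y by (auto simp: consts_rename_tm)
    ultimately have "der False R m (insert (inst_fm 0 ?t A') S) (inst_fm 0 (Fn x []) A)"
      using IH[of m "insert (inst_fm 0 ?t A') S"] allL(1) fin x consts_inst_fm[of 0 ?t A'] xA' by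
        auto
    then show ?thesis
      using allL closed_rename_tm[OF allL(5)] by (auto intro: der.allL)
  next
    case (exL A' z m)
    obtain y where y: "y \<notin> insert x (consts_fms S \<union> consts_fm A)"
      using fresh_const[of "insert x (consts_fms S \<union> consts_fm A)"] fin by auto
    have zA': "z \<notin> consts_fm A'" and xA': "x \<notin> consts_fm A'"
      using exL(4,5) x_sub[OF exL(4)] consts_fm_subset_consts_fms by force+
    have "der False R m (insert (inst_fm 0 (Fn y []) A') S) (All A)"
      using der_rename_eigen[OF exL(7,5) zA' exL(6) fin] .
    then have "der False R m (insert (inst_fm 0 (Fn y []) A') S) (inst_fm 0 (Fn x []) A)"
      using IH[of m "insert (inst_fm 0 (Fn y []) A') S"] exL(1) fin x consts_inst_fm_const[of y A']
        xA' y
      by auto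
    then show ?thesis
      unfolding exL(1) using exL(2,4) y consts_inst_fm_const[of x A]
      by (intro der.exL[where A = A' and x = y]) auto
  next
    case (allR z m)
    then show ?thesis
      using der_rename_eigen_goal[OF allR(5,3,4) fin] by (auto intro: der_Suc)
  qed (auto simp: atomic_or_bot_def is_atomic_def)
qed

lemma der_Ex_inv_no_ExR:
  assumes "der False R n S (Ex A)" "finite S" "ExR \<notin> R" "closed_tm 0 t"
  shows "der False R n S (inst_fm 0 t A)"
  using assms
proof (induction n arbitrary: S rule: less_induct)
  case (less n)
  note IH = less.IH and fin = less.prems(2)
  from less.prems(1) show ?case
  proof cases
    case (botR m)
    then show ?thesis by (auto intro: der.botR)
  next
    case (andL1 A' B' m)
    then show ?thesis using IH[of m "insert A' S"] less.prems by (auto intro: der.andL1)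
  next
    case (andL2 A' B' m)
    then show ?thesis using IH[of m "insert B' S"] less.prems by (auto intro: der.andL2)
  next
    case (orL A' B' m)
    then show ?thesis using IH[of m "insert A' S"] IH[of m "insert B' S"] less.prems
      by (auto intro: der.orL)
  next
    case (impL A' B' m)
    then show ?thesis using IH[of m "insert B' S"] less.prems by (auto intro: der.impL)
  next
    case (allL A' t' m)
    then show ?thesis using IH[of m "insert (inst_fm 0 t' A') S"] less.prems
      by (auto intro: der.allL)
  next
    case (exL A' z m)
    obtain y where y: "y \<notin> consts_fms S \<union> consts_fm A \<union> consts_tm t"
      using fresh_const[of "consts_fms S \<union> consts_fm A \<union> consts_tm t"] fin by auto
    have zA': "z \<notin> consts_fm A'"
      using exL(4,5) consts_fm_subset_consts_fms by force
    have "der False R m (insert (inst_fm 0 (Fn y []) A') S) (Ex A)"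
      using der_rename_eigen[OF exL(7,5) zA' exL(6) fin] .
    then have "der False R m (insert (inst_fm 0 (Fn y []) A') S) (inst_fm 0 t A)"
      using IH exL(1) less.prems by auto
    then show ?thesis
      unfolding exL(1) using exL(2,4) y consts_inst_fm[of 0 t A]
      by (intro der.exL[where A = A' and x = y]) auto
  qed (use less.prems in \<open>auto simp: atomic_or_bot_def is_atomic_def\<close>)
qed

lemma uprov_atomic_goal_step:
  assumes IH: "\<And>S' C'. der False R m S' C' \<Longrightarrow> finite S' \<Longrightarrow> uprov S' C'"
    and "der False R (Suc m) S C" "atomic_or_bot C" "finite S"
  shows "uprov S C"
  using assms(2)
proof cases
  case axTop
  then show ?thesis by (simp add: uprov_Top)
next
  case axAtom
  then show ?thesis by (simp add: uprov_ax)
next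
  case botR
  then show ?thesis using uprov_botR[OF assms(3) IH] assms(4) by simp
next
  case (andL1 A B)
  then show ?thesis using uprov_andL1[OF assms(3) _ IH] assms(4) by simp
next
  case (andL2 A B)
  then show ?thesis using uprov_andL2[OF assms(3) _ IH] assms(4) by simp
next
  case (orL A B)
  then show ?thesis using uprov_orL[OF assms(3) _ IH IH] assms(4) by simp
next
  case (impL A B)
  then show ?thesis using uprov_impL[OF assms(3) _ IH IH] assms(4) by simp
next
  case (allL A t)
  then show ?thesis using uprov_allL[OF assms(3) _ _ IH] assms(4) by simp
next
  case (exL A x)
  then show ?thesis using uprov_exL[OF assms(3) _ _ _ IH] assms(4) by simp
qed (use assms(3) in \<open>auto simp: atomic_or_bot_def is_atomic_def\<close>)

definition restriction2 :: "rule set \<Rightarrow> bool" where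
  "restriction2 R = ((OrR \<notin> R \<or> OrL \<notin> R) \<and> (ExR \<notin> R \<or> OrL \<notin> R \<and> ExL \<notin> R))"

lemma der_Or_inv_restriction2:
  assumes "restriction2 R" "der False R n S (Or A B)"
  shows "der False R n S A \<or> der False R n S B"
  using assms der_Or_inv_no_OrL der_Or_inv_no_OrR unfolding restriction2_def by blast

lemma der_Ex_inv_restriction2:
  assumes "restriction2 R" "der False R n S (Ex A)" "finite S"
  shows "\<exists>t. closed_tm 0 t \<and> der False R n S (inst_fm 0 t A)"
proof (cases "ExR \<in> R")
  case True
  then show ?thesis
    using assms der_Ex_inv_no_OrL_ExL unfolding restriction2_def by blast
next
  case False
  then show ?thesis
    using der_Ex_inv_no_ExR[OF assms(2,3) False, of "Fn 0 []"] by (intro exI[of _ "Fn 0 []"]) simp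
qed

lemma uprov_by_inversion:
  assumes R: "restriction2 R"
    and atomic: "\<And>S C. der False R n S C \<Longrightarrow> finite S \<Longrightarrow> atomic_or_bot C \<Longrightarrow> uprov S C"
  shows "der False R n S C \<Longrightarrow> finite S \<Longrightarrow> uprov S C"
proof (induction "fm_size C" arbitrary: S C rule: less_induct)
  case less
  note IH = less.hyps and der = less.prems(1) and fin = less.prems(2)
  show ?case
  proof (cases C)
    case Top
    then show ?thesis by (simp add: uprov_Top)
  next
    case (Atom p ts)
    then show ?thesis using atomic der fin by (simp add: atomic_or_bot_def is_atomic_def)
  next
    case Bot
    then show ?thesis using atomic der fin by (simp add: atomic_or_bot_def)
  next
    case (And A B)
    then have "der False R n S A" "der False R n S B"
      using der_And_inv[of R n S A B] der by simp_all
    then show ?thesis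
      using IH[of A S] IH[of B S] fin And by (simp add: uprov_andR)
  next
    case (Imp A B)
    then have "der False R n (insert A S) B"
      using der_Imp_inv[of R n S A B] der fin by simp
    then show ?thesis
      using IH[of B "insert A S"] fin Imp by (simp add: uprov_impR)
  next
    case (All A)
    obtain x where x: "x \<notin> consts_fms S \<union> consts_fm A"
      using fresh_const[of "consts_fms S \<union> consts_fm A"] fin by auto
    then have "der False R n S (inst_fm 0 (Fn x []) A)"
      using der_All_inv[of R n S A x] der fin All by simp
    then have "uprov S (inst_fm 0 (Fn x []) A)"
      using IH[of "inst_fm 0 (Fn x []) A" S] fin All by simp
    then show ?thesis
      using All x uprov_allR[of x S A] by simp
  next
    case (Or A B)
    then have "der False R n S A \<or> der False R n S B"
      using der_Or_inv_restriction2[OF R, of n S A B] der by simp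
    then show ?thesis
      using IH[of A S] IH[of B S] fin Or uprov_orR1 uprov_orR2 by auto
  next
    case (Ex A)
    then obtain t where "closed_tm 0 t" "der False R n S (inst_fm 0 t A)"
      using der_Ex_inv_restriction2[OF R _ fin] der by blast
    then show ?thesis
      using IH[of "inst_fm 0 t A" S] fin Ex uprov_exR by simp
  qed
qed

lemma uprov_if_der_restriction2:
  assumes "restriction2 R" "der False R n S C" "finite S"
  shows "uprov S C"
  using assms(2,3)
proof (induction n arbitrary: S C)
  case 0
  show ?case
    by (rule uprov_by_inversion[OF assms(1) _ "0.prems"])
      (auto elim: der.cases simp: uprov_Top uprov_ax)
next
  case (Suc m)
  show ?case
    by (rule uprov_by_inversion[OF assms(1) _ Suc.prems]) (rule uprov_atomic_goal_step[OF Suc.IH])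
qed

section \<open>Proof trees\<close>

lemma intro_ok_left_rule: "intro_ok r C \<Longrightarrow> r \<notin> {AndR, OrR, ImpR, AllR, ExR} \<Longrightarrow> atomic_or_bot C"
  by (cases C) (auto simp: atomic_or_bot_def is_atomic_def)

lemma intro_ok_atomic_or_bot: "atomic_or_bot C \<Longrightarrow> intro_ok r C"
  by (cases C) (auto simp: atomic_or_bot_def is_atomic_def)

lemma der_right_rule:
  assumes inst: "rinst r ps (\<Delta>, {#C#})" and "r \<in> R" and right: "r \<in> {AndR, OrR, ImpR, AllR, ExR}"
    and prem: "\<And>\<Delta>' C'. (\<Delta>', {#C'#}) \<in> set ps \<Longrightarrow> der uni R n (set_mset \<Delta>') C'"
  shows "der uni R (Suc n) (set_mset \<Delta>) C"
proof -
  consider "r = AndR" | "r = OrR" | "r = ImpR" | "r = AllR" | "r = ExR"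
    using right by blast
  then show ?thesis
  proof cases
    case 1
    then obtain A B where "C = And A B" "(\<Delta>, {#A#}) \<in> set ps" "(\<Delta>, {#B#}) \<in> set ps"
      using inst by auto
    then show ?thesis using prem \<open>r \<in> R\<close> 1 by (auto intro: der.andR)
  next
    case 2
    then obtain A B where "C = Or A B" "(\<Delta>, {#A#}) \<in> set ps \<or> (\<Delta>, {#B#}) \<in> set ps"
      using inst by auto
    then show ?thesis using prem \<open>r \<in> R\<close> 2 by (auto intro: der.orR1 der.orR2)
  next
    case 3
    then obtain A B where "C = Imp A B" "(add_mset A \<Delta>, {#B#}) \<in> set ps"
      using inst by auto
    then show ?thesis using prem[of "add_mset A \<Delta>" B] \<open>r \<in> R\<close> 3 by (auto intro: der.impR)
  next
    case 4
    then obtain A x where "C = All A" "(\<Delta>, {#inst_fm 0 (Fn x []) A#}) \<in> set ps"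
      "x \<notin> consts_fms (set_mset \<Delta>)" "x \<notin> consts_fm A"
      using inst by (auto simp: consts_seq_def consts_fms_def)
    then show ?thesis using prem \<open>r \<in> R\<close> 4 by (auto intro: der.allR)
  next
    case 5
    then obtain A t where "C = Ex A" "(\<Delta>, {#inst_fm 0 t A#}) \<in> set ps" "closed_tm 0 t"
      using inst by auto
    then show ?thesis using prem \<open>r \<in> R\<close> 5 by (auto intro: der.exR)
  qed
qed

lemma der_structural_rule:
  assumes inst: "rinst r ps (\<Delta>, {#C#})" and "r \<in> R"
    and structural: "r \<in> {Axiom, ContrL, ContrR, BotR}"
    and uni: "uni \<longrightarrow> r \<noteq> Axiom \<longrightarrow> atomic_or_bot C"
    and single: "\<forall>s\<in>set ps. size (snd s) = 1"
    and prem: "\<And>\<Delta>' C'. (\<Delta>', {#C'#}) \<in> set ps \<Longrightarrow> der uni R n (set_mset \<Delta>') C'"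
  shows "der uni R (Suc n) (set_mset \<Delta>) C"
proof (cases r)
  case Axiom
  then have "C = Top \<or> (C \<in># \<Delta> \<and> atomic_or_bot C)"
    using inst by (auto simp: is_axiom_def atomic_or_bot_def)
  then show ?thesis by (auto intro: der.axTop der.axAtom)
next
  case ContrL
  then obtain B \<Gamma> where "\<Delta> = add_mset B \<Gamma>" "(add_mset B (add_mset B \<Gamma>), {#C#}) \<in> set ps"
    using inst by auto
  then show ?thesis using prem der_Suc by fastforce
next
  case ContrR
  then show ?thesis using inst single by auto
next
  case BotR
  then have "(\<Delta>, {#Bot#}) \<in> set ps"
    using inst by auto
  then show ?thesis using prem uni \<open>r \<in> R\<close> BotR by (auto intro: der.botR)
qed (use structural in auto)

lemma der_left_rule:
  assumes inst: "rinst r ps (\<Delta>, {#C#})" and "r \<in> R" and left: "r \<in> {AndL, OrL, ImpL, AllL, ExL}"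
    and uni: "uni \<longrightarrow> atomic_or_bot C"
    and single: "\<forall>s\<in>set ps. size (snd s) = 1"
    and prem: "\<And>\<Delta>' C'. (\<Delta>', {#C'#}) \<in> set ps \<Longrightarrow> der uni R n (set_mset \<Delta>') C'"
  shows "der uni R (Suc n) (set_mset \<Delta>) C"
proof -
  have prem_ins: "der uni R n (insert P (set_mset \<Delta>)) C"
    if "(add_mset P \<Gamma>, {#C#}) \<in> set ps" "set_mset \<Gamma> \<subseteq> set_mset \<Delta>" for P \<Gamma>
    using der_weaken[OF prem[OF that(1)]] that(2) by auto
  show ?thesis
  proof (cases r)
    case AndL
    then obtain A B \<Gamma> where "\<Delta> = add_mset (And A B) \<Gamma>"
      "(add_mset A \<Gamma>, {#C#}) \<in> set ps \<or> (add_mset B \<Gamma>, {#C#}) \<in> set ps"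
      using inst by auto
    then show ?thesis using prem_ins uni \<open>r \<in> R\<close> AndL by (auto intro: der.andL1 der.andL2)
  next
    case OrL
    then obtain A B \<Gamma> where "\<Delta> = add_mset (Or A B) \<Gamma>"
      "(add_mset A \<Gamma>, {#C#}) \<in> set ps" "(add_mset B \<Gamma>, {#C#}) \<in> set ps"
      using inst by auto
    then show ?thesis using prem_ins uni \<open>r \<in> R\<close> OrL by (auto intro: der.orL)
  next
    case ImpL
    then obtain A B \<Gamma> where \<Delta>: "\<Delta> = add_mset (Imp A B) \<Gamma>"
      and ps: "(\<Gamma>, {#A#}) \<in> set ps" "(add_mset B \<Gamma>, {#C#}) \<in> set ps"
      using inst single by auto
    have "der uni R n (set_mset \<Delta>) A"
      using der_weaken[OF prem[OF ps(1)]] \<Delta> by auto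
    moreover have "der uni R n (insert B (set_mset \<Delta>)) C"
      using prem_ins[OF ps(2)] \<Delta> by auto
    ultimately show ?thesis
      using \<Delta> uni \<open>r \<in> R\<close> ImpL by (intro der.impL[of R uni C A B]) auto
  next
    case AllL
    then obtain A t \<Gamma> where "\<Delta> = add_mset (All A) \<Gamma>" "closed_tm 0 t"
      "(add_mset (inst_fm 0 t A) \<Gamma>, {#C#}) \<in> set ps"
      using inst by auto
    then show ?thesis using prem_ins uni \<open>r \<in> R\<close> AllL by (auto intro: der.allL)
  next
    case ExL
    then obtain A x \<Gamma> where \<Delta>: "\<Delta> = add_mset (Ex A) \<Gamma>"
      and fresh: "x \<notin> consts_fms (set_mset \<Delta>)" "x \<notin> consts_fm C"
      and ps: "(add_mset (inst_fm 0 (Fn x []) A) \<Gamma>, {#C#}) \<in> set ps"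
      using inst by (auto simp: consts_seq_def consts_fms_def)
    have "der uni R n (insert (inst_fm 0 (Fn x []) A) (set_mset \<Delta>)) C"
      using prem_ins[OF ps] \<Delta> by auto
    then show ?thesis
      using \<Delta> fresh uni \<open>r \<in> R\<close> ExL by (intro der.exL[of R uni C A _ x]) auto
  qed (use left in auto)
qed

lemma ex_common_bound:
  fixes P :: "nat \<Rightarrow> 'a \<Rightarrow> bool"
  assumes mono: "\<And>n m x. P n x \<Longrightarrow> n \<le> m \<Longrightarrow> P m x" and "\<forall>x\<in>set xs. \<exists>n. P n x"
  shows "\<exists>n. \<forall>x\<in>set xs. P n x"
  using assms(2)
proof (induction xs)
  case (Cons x xs)
  then obtain n m where "P n x" "\<forall>y\<in>set xs. P m y"
    by auto
  then have "P (max n m) x" "\<forall>y\<in>set xs. P (max n m) y"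
    using mono[of n x "max n m"] mono[of m _ "max n m"] by auto
  then show ?case
    by auto
qed simp

definition single_succedents :: "ptree \<Rightarrow> bool" where
  "single_succedents p = (\<forall>s\<in>all_seqs p. size (snd s) = 1)"

lemma iproof_iff: "iproof p = (cproof p \<and> single_succedents p)"
  by (simp add: iproof_def single_succedents_def)

lemma root_in_all_seqs: "root p \<in> all_seqs p"
  by (cases p) simp

lemma der_of_tree:
  assumes "cproof p" "single_succedents p" "uni \<longrightarrow> uniform_nodes p" "root p = (\<Delta>, {#C#})"
  shows "\<exists>n. der uni {r. uses r p} n (set_mset \<Delta>) C"
  using assms
proof (induction p arbitrary: \<Delta> C)
  case (PT s r ps)
  let ?R = "{r'. uses r' (PT s r ps)}"
  let ?P = "\<lambda>n q. \<forall>\<Delta>' C'. root q = (\<Delta>', {#C'#}) \<longrightarrow> der uni ?R n (set_mset \<Delta>') C'"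
  have single: "size (snd (root q)) = 1" if "q \<in> set ps" for q
    using PT.prems(2) root_in_all_seqs[of q] that by (auto simp: single_succedents_def)
  have child: "\<exists>n. ?P n q" if q: "q \<in> set ps" for q
  proof -
    obtain C' where "snd (root q) = {#C'#}"
      using size_1_singleton_mset[OF single[OF q]] by blast
    then obtain \<Delta>' where root: "root q = (\<Delta>', {#C'#})"
      by (metis prod.collapse)
    have "cproof q" "single_succedents q" "uni \<longrightarrow> uniform_nodes q"
      using PT.prems(1-3) q by (auto simp: single_succedents_def)
    then obtain n where "der uni {r. uses r q} n (set_mset \<Delta>') C'"
      using PT.IH[OF q _ _ _ root] by blast
    then have "der uni ?R n (set_mset \<Delta>') C'"
      by (rule der_mono_rules) (use q in auto)
    then show ?thesis
      using root by auto
  qed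
  have "\<exists>n. \<forall>q\<in>set ps. ?P n q"
  proof (rule ex_common_bound)
    show "?P m q" if "?P n q" "n \<le> m" for n m q
      using that by (meson der_mono_height)
  qed (use child in blast)
  then obtain n where "\<forall>q\<in>set ps. ?P n q"
    by blast
  then have prem: "\<And>\<Delta>' C'. (\<Delta>', {#C'#}) \<in> set (map root ps) \<Longrightarrow> der uni ?R n (set_mset \<Delta>') C'"
    by auto
  have inst: "rinst r (map root ps) (\<Delta>, {#C#})" and "r \<in> ?R"
    using PT.prems(1,4) by auto
  have uni: "uni \<longrightarrow> r \<noteq> Axiom \<longrightarrow> intro_ok r C"
    using PT.prems(3,4) by auto
  have single_prems: "\<forall>s\<in>set (map root ps). size (snd s) = 1"
    using single by auto
  consider "r \<in> {AndR, OrR, ImpR, AllR, ExR}" | "r \<in> {Axiom, ContrL, ContrR, BotR}"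
    | "r \<in> {AndL, OrL, ImpL, AllL, ExL}"
    by (cases r) auto
  then have "der uni ?R (Suc n) (set_mset \<Delta>) C"
  proof cases
    case 1
    then show ?thesis
      by (rule der_right_rule[OF inst \<open>r \<in> ?R\<close>]) (rule prem)
  next
    case 2
    then have "uni \<longrightarrow> r \<noteq> Axiom \<longrightarrow> atomic_or_bot C"
      using uni intro_ok_left_rule by auto
    then show ?thesis
      by (rule der_structural_rule[OF inst \<open>r \<in> ?R\<close> 2 _ single_prems]) (rule prem)
  next
    case 3
    then have "uni \<longrightarrow> atomic_or_bot C"
      using uni intro_ok_left_rule by auto
    then show ?thesis
      by (rule der_left_rule[OF inst \<open>r \<in> ?R\<close> 3 _ single_prems]) (rule prem)
  qed
  then show ?case
    by blast
qed

definition has_uproof :: "fm multiset \<Rightarrow> fm \<Rightarrow> bool" where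
  "has_uproof \<Delta> C = (\<exists>q. uproof q \<and> root q = (\<Delta>, {#C#}))"

lemma has_uproof_rule:
  assumes inst: "rinst r (map (\<lambda>(\<Delta>', C'). (\<Delta>', {#C'#})) prems) (\<Delta>, {#C#})"
    and ok: "r \<noteq> Axiom \<longrightarrow> intro_ok r C"
    and prems: "\<forall>(\<Delta>', C')\<in>set prems. has_uproof \<Delta>' C'"
  shows "has_uproof \<Delta> C"
proof -
  define qs where "qs = map (\<lambda>(\<Delta>', C'). SOME q. uproof q \<and> root q = (\<Delta>', {#C'#})) prems"
  have "uproof (SOME q. uproof q \<and> root q = (\<Delta>', {#C'#})) \<and>
      root (SOME q. uproof q \<and> root q = (\<Delta>', {#C'#})) = (\<Delta>', {#C'#})"
    if "(\<Delta>', C') \<in> set prems" for \<Delta>' C'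
  proof (rule someI_ex)
    show "\<exists>q. uproof q \<and> root q = (\<Delta>', {#C'#})"
      using prems that by (auto simp: has_uproof_def)
  qed
  then have qs: "\<forall>q\<in>set qs. uproof q" "map root qs = map (\<lambda>(\<Delta>', C'). (\<Delta>', {#C'#})) prems"
    unfolding qs_def by (auto intro!: map_cong)
  have "uproof (PT (\<Delta>, {#C#}) r qs)"
    using qs inst ok by (auto simp: uproof_def iproof_def)
  then show ?thesis
    unfolding has_uproof_def by (intro exI[of _ "PT (\<Delta>, {#C#}) r qs"]) simp
qed

lemma has_uproof_left_rule:
  assumes "F \<in># \<Delta>" "rinst r (map (\<lambda>(\<Delta>', C'). (\<Delta>', {#C'#})) prems) (add_mset F \<Delta>, {#C#})"
    "atomic_or_bot C" "\<forall>(\<Delta>', C')\<in>set prems. has_uproof \<Delta>' C'"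
  shows "has_uproof \<Delta> C"
proof (rule has_uproof_rule[where r = ContrL and prems = "[(add_mset F \<Delta>, C)]"])
  show "rinst ContrL (map (\<lambda>(\<Delta>', C'). (\<Delta>', {#C'#})) [(add_mset F \<Delta>, C)]) (\<Delta>, {#C#})"
    using assms(1) by (auto intro!: exI[of _ F] exI[of _ "\<Delta> - {#F#}"])
  show "\<forall>(\<Delta>', C')\<in>set [(add_mset F \<Delta>, C)]. has_uproof \<Delta>' C'"
    using has_uproof_rule[OF assms(2) _ assms(4)] assms(3) intro_ok_atomic_or_bot by auto
qed (use assms(3) intro_ok_atomic_or_bot in blast)

lemma has_uproof_if_der:
  assumes "der True R n S C" "set_mset \<Delta> = S"
  shows "has_uproof \<Delta> C"
  using assms
proof (induction True R n S C arbitrary: \<Delta> rule: der.induct)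
  case (axTop R n S)
  then show ?case
    by (intro has_uproof_rule[where r = Axiom and prems = "[]"]) (auto simp: is_axiom_def)
next
  case (axAtom C S R n)
  then show ?case
    by (intro has_uproof_rule[where r = Axiom and prems = "[]"])
      (auto simp: is_axiom_def atomic_or_bot_def)
next
  case (botR R C n S)
  then show ?case
    by (intro has_uproof_rule[where r = BotR and prems = "[(\<Delta>, Bot)]"])
      (auto simp: intro_ok_atomic_or_bot)
next
  case (andL1 R C A B S n)
  then show ?case
    by (intro has_uproof_left_rule[where F = "And A B" and r = AndL
      and prems = "[(add_mset A \<Delta>, C)]"]) auto
next
  case (andL2 R C A B S n)
  then show ?case
    by (intro has_uproof_left_rule[where F = "And A B" and r = AndL
      and prems = "[(add_mset B \<Delta>, C)]"]) auto
next
  case (orL R C A B S n)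
  then show ?case
    by (intro has_uproof_left_rule[where F = "Or A B" and r = OrL
          and prems = "[(add_mset A \<Delta>, C), (add_mset B \<Delta>, C)]"]) auto
next
  case (impL R C A B S n)
  then show ?case
    by (intro has_uproof_left_rule[where F = "Imp A B" and r = ImpL
          and prems = "[(\<Delta>, A), (add_mset B \<Delta>, C)]"]) (auto intro!: exI[of _ "{#}"])
next
  case (allL R C A S t n)
  then show ?case
    by (intro has_uproof_left_rule[where F = "All A" and r = AllL
          and prems = "[(add_mset (inst_fm 0 t A) \<Delta>, C)]"]) auto
next
  case (exL R C A S x n)
  then have "x \<notin> consts_fm A"
    using consts_fm_subset_consts_fms by fastforce
  with exL show ?case
    by (intro has_uproof_left_rule[where F = "Ex A" and r = ExL
          and prems = "[(add_mset (inst_fm 0 (Fn x []) A) \<Delta>, C)]"])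
      (auto simp: consts_seq_def consts_fms_def)
next
  case (andR R n S A B)
  then show ?case
    by (intro has_uproof_rule[where r = AndR and prems = "[(\<Delta>, A), (\<Delta>, B)]"]) auto
next
  case (orR1 R n S A B)
  then show ?case
    by (intro has_uproof_rule[where r = OrR and prems = "[(\<Delta>, A)]"]) auto
next
  case (orR2 R n S B A)
  then show ?case
    by (intro has_uproof_rule[where r = OrR and prems = "[(\<Delta>, B)]"]) auto
next
  case (impR R n A S B)
  then show ?case
    by (intro has_uproof_rule[where r = ImpR and prems = "[(add_mset A \<Delta>, B)]"]) auto
next
  case (allR R x S A n)
  then show ?case
    by (intro has_uproof_rule[where r = AllR and prems = "[(\<Delta>, inst_fm 0 (Fn x []) A)]"])
      (auto simp: consts_seq_def consts_fms_def)
next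
  case (exR R t n S A)
  then show ?case
    by (intro has_uproof_rule[where r = ExR and prems = "[(\<Delta>, inst_fm 0 t A)]"]) auto
qed

lemma has_uproof_iff_uprov: "has_uproof \<Delta> C \<longleftrightarrow> uprov (set_mset \<Delta>) C"
proof
  assume "has_uproof \<Delta> C"
  then obtain q where "uproof q" "root q = (\<Delta>, {#C#})"
    unfolding has_uproof_def by blast
  then obtain n where "der True {r. uses r q} n (set_mset \<Delta>) C"
    using der_of_tree[of q True] by (auto simp: uproof_def iproof_iff)
  then show "uprov (set_mset \<Delta>) C"
    unfolding uprov_def using der_mono_rules by blast
next
  assume "uprov (set_mset \<Delta>) C"
  then show "has_uproof \<Delta> C"
    unfolding uprov_def using has_uproof_if_der by blast
qed

lemma uproof_if_restricted_iproof:
  assumes "iproof p" "root p = goal_seq G \<Gamma>" "restricted p"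
  shows "\<exists>q. uproof q \<and> root q = goal_seq G \<Gamma>"
proof -
  let ?R = "{r. uses r p}" and ?S = "set_mset (add_mset (Neg G) \<Gamma>)"
  obtain n where der: "der False ?R n ?S G"
    using der_of_tree[of p False] assms(1,2) by (auto simp: iproof_iff goal_seq_def)
  have "uprov ?S G"
  proof (cases "AllR \<notin> ?R \<or> AllL \<notin> ?R \<and> ImpR \<notin> ?R")
    case True
    then show ?thesis
      using uprov_if_der_refuted_goal[OF der] by (simp add: Neg_def)
  next
    case False
    then have "restriction2 ?R"
      using assms(3) by (auto simp: restricted_def restriction2_def)
    then show ?thesis
      using uprov_if_der_restriction2 der by simp
  qed
  then show ?thesis
    using has_uproof_iff_uprov by (simp add: has_uproof_def goal_seq_def)
qed

section \<open>Counterexamples\<close>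

definition nonuniform_example :: "rule set \<Rightarrow> bool" where
  "nonuniform_example Rs =
     (\<exists>G \<Gamma> p. wff G \<and> (\<forall>A\<in>#\<Gamma>. wff A) \<and> iproof p \<and> root p = goal_seq G \<Gamma> \<and> (\<forall>r\<in>Rs. uses r p)
        \<and> \<not> (\<exists>q. uproof q \<and> root q = goal_seq G \<Gamma>))"

lemma nonuniform_exampleI:
  assumes "wff G" "\<forall>A\<in>#\<Gamma>. wff A" "cproof p" "single_succedents p" "root p = goal_seq G \<Gamma>"
    "\<forall>r\<in>Rs. uses r p" "\<And>n. \<not> der True UNIV n (insert (Neg G) (set_mset \<Gamma>)) G"
  shows "nonuniform_example Rs"
  unfolding nonuniform_example_def
  using assms has_uproof_iff_uprov[of "add_mset (Neg G) \<Gamma>" G]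
  by (auto simp: iproof_iff has_uproof_def goal_seq_def uprov_def)

lemma cproof_Axiom: "is_axiom s \<Longrightarrow> cproof (PT s Axiom [])"
  by simp

lemma cproof_AllR:
  "cproof q \<Longrightarrow> root q = (\<Gamma>, {#inst_fm 0 (Fn x []) B#}) \<Longrightarrow> x \<notin> consts_seq (\<Gamma>, {#All B#}) \<Longrightarrow>
   cproof (PT (\<Gamma>, {#All B#}) AllR [q])"
  by (simp; blast?)

lemma cproof_AllL:
  "cproof q \<Longrightarrow> root q = (add_mset (inst_fm 0 t B) \<Gamma>, \<Delta>) \<Longrightarrow> closed_tm 0 t \<Longrightarrow>
   cproof (PT (add_mset (All B) \<Gamma>, \<Delta>) AllL [q])"
  by (simp; blast?)

lemma cproof_ExL:
  "cproof q \<Longrightarrow> root q = (add_mset (inst_fm 0 (Fn x []) B) \<Gamma>, \<Delta>) \<Longrightarrow>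
   x \<notin> consts_seq (add_mset (Ex B) \<Gamma>, \<Delta>) \<Longrightarrow> cproof (PT (add_mset (Ex B) \<Gamma>, \<Delta>) ExL [q])"
  by (simp; blast?)

lemma cproof_ExR:
  "cproof q \<Longrightarrow> root q = (\<Gamma>, {#inst_fm 0 t B#}) \<Longrightarrow> closed_tm 0 t \<Longrightarrow>
   cproof (PT (\<Gamma>, {#Ex B#}) ExR [q])"
  by (simp; blast?)

lemma cproof_ImpR:
  "cproof q \<Longrightarrow> root q = (add_mset B \<Gamma>, {#D#}) \<Longrightarrow> cproof (PT (\<Gamma>, {#Imp B D#}) ImpR [q])"
  by (simp; blast?)

lemma cproof_OrR:
  "cproof q \<Longrightarrow> root q = (\<Gamma>, {#B#}) \<or> root q = (\<Gamma>, {#D#}) \<Longrightarrow>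
   cproof (PT (\<Gamma>, {#Or B D#}) OrR [q])"
  by (simp; blast?)

lemma cproof_OrL:
  "cproof q1 \<Longrightarrow> cproof q2 \<Longrightarrow> root q1 = (add_mset B \<Gamma>, \<Delta>) \<Longrightarrow> root q2 = (add_mset D \<Gamma>, \<Delta>) \<Longrightarrow>
   cproof (PT (add_mset (Or B D) \<Gamma>, \<Delta>) OrL [q1, q2])"
  by (simp; blast?)

lemmas cproof_nodes =
  cproof_Axiom cproof_AllR cproof_AllL cproof_ExL cproof_ExR cproof_ImpR cproof_OrR cproof_OrL

text \<open>Each predicate \<open>stuckX\<close> is an invariant of uniform proof search: it holds for the goal
  sequent, excludes axioms, and every uniform rule instance concluding such a sequent has a
  premise satisfying it.\<close>

abbreviation Pa :: "tm \<Rightarrow> fm" where "Pa t \<equiv> Atom 0 [t]"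
abbreviation Qa :: "tm \<Rightarrow> fm" where "Qa t \<equiv> Atom 1 [t]"
abbreviation Ra :: "tm \<Rightarrow> tm \<Rightarrow> fm" where "Ra s t \<equiv> Atom 2 [s, t]"
abbreviation c :: tm where "c \<equiv> Fn 7 []"
abbreviation d :: tm where "d \<equiv> Fn 8 []"
abbreviation k :: tm where "k \<equiv> Fn 5 []"

text \<open>\<open>\<forall>x (Q x \<or> P x) \<longrightarrow> \<forall>x (P x \<or> Q x)\<close>: a uniform proof has to choose a disjunct of
  \<open>P c \<or> Q c\<close> before \<open>\<or>\<close>-L splits the hypothesis, and \<open>\<supset>\<close>-L on the negated goal only
  restarts the search with a fresh eigenvariable.\<close>

definition GA :: fm where
  "GA = All (Or (Pa (Bnd 0)) (Qa (Bnd 0)))"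
definition HA :: fm where
  "HA = All (Or (Qa (Bnd 0)) (Pa (Bnd 0)))"

definition treeA :: ptree where
  "treeA =
    PT (add_mset (Neg GA) {#HA#}, {#GA#}) AllR [
     PT (add_mset HA {#Neg GA#}, {#Or (Pa c) (Qa c)#}) AllL [
      PT (add_mset (Or (Qa c) (Pa c)) {#Neg GA#}, {#Or (Pa c) (Qa c)#}) OrL [
       PT (add_mset (Qa c) {#Neg GA#}, {#Or (Pa c) (Qa c)#})
         OrR [PT (add_mset (Qa c) {#Neg GA#}, {#Qa c#}) Axiom []],
       PT (add_mset (Pa c) {#Neg GA#}, {#Or (Pa c) (Qa c)#})
         OrR [PT (add_mset (Pa c) {#Neg GA#}, {#Pa c#}) Axiom []]]]]"

lemma treeA_cproof: "cproof treeA"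
  unfolding treeA_def GA_def HA_def
  by (intro cproof_nodes)
    (auto simp: GA_def HA_def Neg_def consts_seq_def is_axiom_def is_atomic_def add_mset_commute)

definition shapeA :: "fm set \<Rightarrow> bool" where
  "shapeA S = (\<forall>F\<in>S. F = Imp GA Bot \<or> F = HA \<or> (\<exists>t. F = Or (Qa t) (Pa t)) \<or> (\<exists>p ts. F = Atom p ts))"
definition stuckA :: "fm set \<Rightarrow> fm \<Rightarrow> bool" where
  "stuckA S C = (shapeA S \<and> (C = GA \<or> C = Bot \<or> (\<exists>t. C = Or (Pa t) (Qa t) \<and> Pa t \<notin> S \<and> Qa t \<notin> S)
   \<or> (\<exists>t. C = Pa t \<and> C \<notin> S) \<or> (\<exists>t. C = Qa t \<and> C \<notin> S)))"

lemma not_der_stuckA: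
  assumes "der True R n S C" "stuckA S C"
  shows False
  using assms
proof (induction True R n S C rule: der.induct)
  case (orL R C A B S n)
  then obtain t where "A = Qa t" "B = Pa t" unfolding stuckA_def shapeA_def
    by (auto simp: GA_def HA_def)
  then show ?case using orL unfolding stuckA_def shapeA_def
    by (auto simp: atomic_or_bot_def is_atomic_def)
next
  case (allL R C A S t n)
  then have "A = Or (Qa (Bnd 0)) (Pa (Bnd 0))" unfolding stuckA_def shapeA_def
    by (auto simp: GA_def HA_def)
  then show ?case using allL unfolding stuckA_def shapeA_def
    by (auto simp: atomic_or_bot_def is_atomic_def)
next
  case (impL R C A B S n)
  then have "A = GA" unfolding stuckA_def shapeA_def by (auto simp: GA_def HA_def)
  then show ?case using impL unfolding stuckA_def shapeA_def by auto
next
  case (allR R x S A n)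
  then have "A = Or (Pa (Bnd 0)) (Qa (Bnd 0))" unfolding stuckA_def by (auto simp: GA_def)
  moreover have "Pa (Fn x []) \<notin> S" "Qa (Fn x []) \<notin> S"
    using allR(2) consts_fm_subset_consts_fms by fastforce+
  ultimately show ?case using allR unfolding stuckA_def by auto
qed (auto simp: stuckA_def shapeA_def GA_def HA_def atomic_or_bot_def is_atomic_def)

lemma nonuniform_example_A: "nonuniform_example {AllR, OrR, OrL, AllL}"
proof (rule nonuniform_exampleI[of GA "{#HA#}" treeA, OF _ _ treeA_cproof])
  show "\<not> der True UNIV n (insert (Neg GA) (set_mset {#HA#})) GA" for n
    using not_der_stuckA[of UNIV n "insert (Neg GA) (set_mset {#HA#})" GA]
    by (auto simp: stuckA_def shapeA_def Neg_def)
qed (auto simp: single_succedents_def treeA_def goal_seq_def wff_def GA_def HA_def)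

text \<open>\<open>\<longrightarrow> \<forall>x ((Q x \<or> P x) \<supset> (P x \<or> Q x))\<close>: the same, with the disjunction moved into the
  antecedent by \<open>\<supset>\<close>-R.\<close>

definition GB :: fm where
  "GB = All (Imp (Or (Qa (Bnd 0)) (Pa (Bnd 0))) (Or (Pa (Bnd 0)) (Qa (Bnd 0))))"

definition treeB :: ptree where
  "treeB =
    PT ({#Neg GB#}, {#GB#}) AllR [
     PT ({#Neg GB#}, {#Imp (Or (Qa c) (Pa c)) (Or (Pa c) (Qa c))#}) ImpR [
      PT (add_mset (Or (Qa c) (Pa c)) {#Neg GB#}, {#Or (Pa c) (Qa c)#}) OrL [
       PT (add_mset (Qa c) {#Neg GB#}, {#Or (Pa c) (Qa c)#})
         OrR [PT (add_mset (Qa c) {#Neg GB#}, {#Qa c#}) Axiom []],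
       PT (add_mset (Pa c) {#Neg GB#}, {#Or (Pa c) (Qa c)#})
         OrR [PT (add_mset (Pa c) {#Neg GB#}, {#Pa c#}) Axiom []]]]]"

lemma treeB_cproof: "cproof treeB"
  unfolding treeB_def GB_def
  by (intro cproof_nodes)
    (auto simp: Neg_def consts_seq_def is_axiom_def is_atomic_def add_mset_commute)

definition shapeB :: "fm set \<Rightarrow> bool" where
  "shapeB S = (\<forall>F\<in>S. F = Imp GB Bot \<or> (\<exists>t. F = Or (Qa t) (Pa t)) \<or> (\<exists>p ts. F = Atom p ts))"
definition stuckB :: "fm set \<Rightarrow> fm \<Rightarrow> bool" where
  "stuckB S C = (shapeB S \<and> (C = GB \<or> C = Bot
   \<or> (\<exists>t. C = Imp (Or (Qa t) (Pa t)) (Or (Pa t) (Qa t)) \<and> Pa t \<notin> S \<and> Qa t \<notin> S)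
   \<or> (\<exists>t. C = Or (Pa t) (Qa t) \<and> Pa t \<notin> S \<and> Qa t \<notin> S)
   \<or> (\<exists>t. C = Pa t \<and> C \<notin> S) \<or> (\<exists>t. C = Qa t \<and> C \<notin> S)))"

lemma not_der_stuckB:
  assumes "der True R n S C" "stuckB S C"
  shows False
  using assms
proof (induction True R n S C rule: der.induct)
  case (orL R C A B S n)
  then obtain t where "A = Qa t" "B = Pa t" unfolding stuckB_def shapeB_def by (auto simp: GB_def)
  then show ?case using orL unfolding stuckB_def shapeB_def
    by (auto simp: atomic_or_bot_def is_atomic_def)
next
  case (impL R C A B S n)
  then have "A = GB" unfolding stuckB_def shapeB_def by (auto simp: GB_def)
  then show ?case using impL unfolding stuckB_def shapeB_def by auto
next
  case (impR R n A S B)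
  then show ?case unfolding stuckB_def shapeB_def by (auto simp: GB_def)
next
  case (allR R x S A n)
  then have "A = Imp (Or (Qa (Bnd 0)) (Pa (Bnd 0))) (Or (Pa (Bnd 0)) (Qa (Bnd 0)))"
    unfolding stuckB_def by (auto simp: GB_def)
  moreover have "Pa (Fn x []) \<notin> S" "Qa (Fn x []) \<notin> S"
    using allR(2) consts_fm_subset_consts_fms by fastforce+
  ultimately show ?case using allR unfolding stuckB_def by auto
qed (auto simp: stuckB_def shapeB_def GB_def atomic_or_bot_def is_atomic_def)

lemma nonuniform_example_B: "nonuniform_example {AllR, OrR, OrL, ImpR}"
proof (rule nonuniform_exampleI[of GB "{#}" treeB, OF _ _ treeB_cproof])
  show "\<not> der True UNIV n (insert (Neg GB) (set_mset {#})) GB" for n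
    using not_der_stuckB[of UNIV n "insert (Neg GB) (set_mset {#})" GB]
    by (auto simp: stuckB_def shapeB_def Neg_def)
qed (auto simp: single_succedents_def treeB_def goal_seq_def wff_def GB_def)

text \<open>\<open>\<forall>x \<exists>y R x y \<longrightarrow> \<forall>x \<exists>y R x y\<close>: the witness of \<open>\<exists>\<close>-R would have to be the
  eigenvariable of an \<open>\<exists>\<close>-L step above it.\<close>

definition GC :: fm where
  "GC = All (Ex (Ra (Bnd 1) (Bnd 0)))"

definition treeC :: ptree where
  "treeC =
    PT (add_mset (Neg GC) {#GC#}, {#GC#}) AllR [
     PT (add_mset GC {#Neg GC#}, {#Ex (Ra c (Bnd 0))#}) AllL [
      PT (add_mset (Ex (Ra c (Bnd 0))) {#Neg GC#}, {#Ex (Ra c (Bnd 0))#}) ExL [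
       PT (add_mset (Ra c d) {#Neg GC#}, {#Ex (Ra c (Bnd 0))#}) ExR [
        PT (add_mset (Ra c d) {#Neg GC#}, {#Ra c d#}) Axiom []]]]]"

lemma treeC_cproof: "cproof treeC"
  unfolding treeC_def GC_def
  by (intro cproof_nodes)
    (auto simp: Neg_def consts_seq_def is_axiom_def is_atomic_def add_mset_commute)

definition shapeC :: "fm set \<Rightarrow> bool" where
  "shapeC S =
     (\<forall>F\<in>S. F = Imp GC Bot \<or> F = GC \<or> (\<exists>t. F = Ex (Ra t (Bnd 0))) \<or> (\<exists>p ts. F = Atom p ts))"
definition stuckC :: "fm set \<Rightarrow> fm \<Rightarrow> bool" where
  "stuckC S C = (shapeC S \<and> (C = GC \<or> C = Bot
   \<or> (\<exists>x. C = Ex (Ra (Fn x []) (Bnd 0)) \<and> (\<forall>v. Ra (Fn x []) v \<notin> S))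
   \<or> (is_atomic C \<and> C \<notin> S)))"

lemma not_der_stuckC:
  assumes "der True R n S C" "stuckC S C"
  shows False
  using assms
proof (induction True R n S C rule: der.induct)
  case (impL R C A B S n)
  then have "A = GC" unfolding stuckC_def shapeC_def by (auto simp: GC_def)
  then show ?case using impL unfolding stuckC_def shapeC_def by auto
next
  case (allL R C A S t n)
  then have "A = Ex (Ra (Bnd 1) (Bnd 0))" unfolding stuckC_def shapeC_def by (auto simp: GC_def)
  then show ?case using allL unfolding stuckC_def shapeC_def
    by (auto simp: atomic_or_bot_def is_atomic_def)
next
  case (exL R C A S x n)
  then obtain t where A: "A = Ra t (Bnd 0)" unfolding stuckC_def shapeC_def by (auto simp: GC_def)
  have "C \<noteq> inst_fm 0 (Fn x []) A" using exL(5) A by auto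
  then show ?case using exL A unfolding stuckC_def shapeC_def
    by (auto simp: atomic_or_bot_def is_atomic_def)
next
  case (allR R x S A n)
  then have "A = Ex (Ra (Bnd 1) (Bnd 0))" unfolding stuckC_def by (auto simp: GC_def is_atomic_def)
  moreover have "\<forall>v. Ra (Fn x []) v \<notin> S" using allR(2) consts_fm_subset_consts_fms by fastforce
  ultimately show ?case using allR unfolding stuckC_def by auto
next
  case (exR R t n S A)
  then show ?case unfolding stuckC_def by (auto simp: GC_def is_atomic_def)
qed (auto simp: stuckC_def shapeC_def GC_def atomic_or_bot_def is_atomic_def)

lemma nonuniform_example_C: "nonuniform_example {AllR, ExR, ExL, AllL}"
proof (rule nonuniform_exampleI[of GC "{#GC#}" treeC, OF _ _ treeC_cproof])
  show "\<not> der True UNIV n (insert (Neg GC) (set_mset {#GC#})) GC" for n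
    using not_der_stuckC[of UNIV n "insert (Neg GC) (set_mset {#GC#})" GC]
    by (auto simp: stuckC_def shapeC_def Neg_def)
qed (auto simp: single_succedents_def treeC_def goal_seq_def wff_def GC_def)

text \<open>\<open>\<longrightarrow> \<forall>x (\<exists>y R x y \<supset> \<exists>y R x y)\<close>: the same, via \<open>\<supset>\<close>-R.\<close>

definition GD :: fm where
  "GD = All (Imp (Ex (Ra (Bnd 1) (Bnd 0))) (Ex (Ra (Bnd 1) (Bnd 0))))"

definition treeD :: ptree where
  "treeD =
    PT ({#Neg GD#}, {#GD#}) AllR [
     PT ({#Neg GD#}, {#Imp (Ex (Ra c (Bnd 0))) (Ex (Ra c (Bnd 0)))#}) ImpR [
      PT (add_mset (Ex (Ra c (Bnd 0))) {#Neg GD#}, {#Ex (Ra c (Bnd 0))#}) ExL [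
       PT (add_mset (Ra c d) {#Neg GD#}, {#Ex (Ra c (Bnd 0))#}) ExR [
        PT (add_mset (Ra c d) {#Neg GD#}, {#Ra c d#}) Axiom []]]]]"

lemma treeD_cproof: "cproof treeD"
  unfolding treeD_def GD_def
  by (intro cproof_nodes)
    (auto simp: Neg_def consts_seq_def is_axiom_def is_atomic_def add_mset_commute)

definition shapeD :: "fm set \<Rightarrow> bool" where
  "shapeD S = (\<forall>F\<in>S. F = Imp GD Bot \<or> (\<exists>t. F = Ex (Ra t (Bnd 0))) \<or> (\<exists>p ts. F = Atom p ts))"
definition stuckD :: "fm set \<Rightarrow> fm \<Rightarrow> bool" where
  "stuckD S C = (shapeD S \<and> (C = GD \<or> C = Bot
   \<or> (\<exists>x. C = Imp (Ex (Ra (Fn x []) (Bnd 0))) (Ex (Ra (Fn x []) (Bnd 0)))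
     \<and> (\<forall>v. Ra (Fn x []) v \<notin> S))
   \<or> (\<exists>x. C = Ex (Ra (Fn x []) (Bnd 0)) \<and> (\<forall>v. Ra (Fn x []) v \<notin> S))
   \<or> (is_atomic C \<and> C \<notin> S)))"

lemma not_der_stuckD:
  assumes "der True R n S C" "stuckD S C"
  shows False
  using assms
proof (induction True R n S C rule: der.induct)
  case (impL R C A B S n)
  then have "A = GD" unfolding stuckD_def shapeD_def by (auto simp: GD_def)
  then show ?case using impL unfolding stuckD_def shapeD_def by auto
next
  case (exL R C A S x n)
  then obtain t where A: "A = Ra t (Bnd 0)" unfolding stuckD_def shapeD_def by (auto simp: GD_def)
  have "C \<noteq> inst_fm 0 (Fn x []) A" using exL(5) A by auto
  then show ?case using exL A unfolding stuckD_def shapeD_def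
    by (auto simp: atomic_or_bot_def is_atomic_def)
next
  case (impR R n A S B)
  then show ?case unfolding stuckD_def shapeD_def by (auto simp: GD_def is_atomic_def)
next
  case (allR R x S A n)
  then have "A = Imp (Ex (Ra (Bnd 1) (Bnd 0))) (Ex (Ra (Bnd 1) (Bnd 0)))" unfolding stuckD_def
    by (auto simp: GD_def is_atomic_def)
  moreover have "\<forall>v. Ra (Fn x []) v \<notin> S" using allR(2) consts_fm_subset_consts_fms by fastforce
  ultimately show ?case using allR unfolding stuckD_def by auto
next
  case (exR R t n S A)
  then show ?case unfolding stuckD_def by (auto simp: GD_def is_atomic_def)
qed (auto simp: stuckD_def shapeD_def GD_def atomic_or_bot_def is_atomic_def)

lemma nonuniform_example_D: "nonuniform_example {AllR, ExR, ExL, ImpR}"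
proof (rule nonuniform_exampleI[of GD "{#}" treeD, OF _ _ treeD_cproof])
  show "\<not> der True UNIV n (insert (Neg GD) (set_mset {#})) GD" for n
    using not_der_stuckD[of UNIV n "insert (Neg GD) (set_mset {#})" GD]
    by (auto simp: stuckD_def shapeD_def Neg_def)
qed (auto simp: single_succedents_def treeD_def goal_seq_def wff_def GD_def)

text \<open>\<open>\<forall>x (R x x \<or> R x k) \<longrightarrow> \<forall>x \<exists>y R x y\<close>: the witness of \<open>\<exists>\<close>-R depends on the branch
  of \<open>\<or>\<close>-L.\<close>

definition HE :: fm where
  "HE = All (Or (Ra (Bnd 0) (Bnd 0)) (Ra (Bnd 0) k))"

definition treeE :: ptree where
  "treeE =
    PT (add_mset (Neg GC) {#HE#}, {#GC#}) AllR [
     PT (add_mset HE {#Neg GC#}, {#Ex (Ra c (Bnd 0))#}) AllL [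
      PT (add_mset (Or (Ra c c) (Ra c k)) {#Neg GC#}, {#Ex (Ra c (Bnd 0))#}) OrL [
       PT (add_mset (Ra c c) {#Neg GC#}, {#Ex (Ra c (Bnd 0))#}) ExR [
        PT (add_mset (Ra c c) {#Neg GC#}, {#Ra c c#}) Axiom []],
       PT (add_mset (Ra c k) {#Neg GC#}, {#Ex (Ra c (Bnd 0))#}) ExR [
        PT (add_mset (Ra c k) {#Neg GC#}, {#Ra c k#}) Axiom []]]]]"

lemma treeE_cproof: "cproof treeE"
  unfolding treeE_def GC_def HE_def
  by (intro cproof_nodes)
    (auto simp: Neg_def consts_seq_def is_axiom_def is_atomic_def add_mset_commute)

definition shapeE :: "fm set \<Rightarrow> bool" where
  "shapeE S =
     (\<forall>F\<in>S. F = Imp GC Bot \<or> F = HE \<or> (\<exists>t. F = Or (Ra t t) (Ra t k)) \<or> (\<exists>p ts. F = Atom p ts))"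
definition stuckE :: "fm set \<Rightarrow> fm \<Rightarrow> bool" where
  "stuckE S C = (HE \<in> S \<and> shapeE S \<and> (C = GC \<or> C = Bot
   \<or> (\<exists>x. x \<noteq> 5 \<and> C = Ex (Ra (Fn x []) (Bnd 0)) \<and> (\<forall>v. Ra (Fn x []) v \<notin> S))
   \<or> (\<exists>x v. x \<noteq> 5 \<and> C = Ra (Fn x []) v \<and> C \<notin> S)))"

lemma not_der_stuckE:
  assumes "der True R n S C" "stuckE S C"
  shows False
  using assms
proof (induction True R n S C rule: der.induct)
  case (orL R C A B S n)
  then obtain t where AB: "A = Ra t t" "B = Ra t k" unfolding stuckE_def shapeE_def
    by (auto simp: GC_def HE_def)
  show ?case
  proof (cases "C = A")
    case True
    then have "C \<noteq> B" using orL AB unfolding stuckE_def by (auto simp: GC_def)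
    then show ?thesis using orL AB unfolding stuckE_def shapeE_def
      by (auto simp: atomic_or_bot_def is_atomic_def GC_def)
  next
    case False
    then show ?thesis using orL AB unfolding stuckE_def shapeE_def
      by (auto simp: atomic_or_bot_def is_atomic_def)
  qed
next
  case (allL R C A S t n)
  then have "A = Or (Ra (Bnd 0) (Bnd 0)) (Ra (Bnd 0) k)" unfolding stuckE_def shapeE_def
    by (auto simp: GC_def HE_def)
  then show ?case using allL unfolding stuckE_def shapeE_def
    by (auto simp: atomic_or_bot_def is_atomic_def)
next
  case (impL R C A B S n)
  then have "A = GC" unfolding stuckE_def shapeE_def by (auto simp: GC_def HE_def)
  then show ?case using impL unfolding stuckE_def shapeE_def by auto
next
  case (allR R x S A n)
  then have "A = Ex (Ra (Bnd 1) (Bnd 0))" unfolding stuckE_def by (auto simp: GC_def)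
  moreover have "\<forall>v. Ra (Fn x []) v \<notin> S" using allR(2) consts_fm_subset_consts_fms by fastforce
  moreover have "x \<noteq> 5" using allR(2) consts_fm_subset_consts_fms[of HE S] allR(6)
    unfolding stuckE_def by (auto simp: HE_def)
  ultimately show ?case using allR unfolding stuckE_def by auto
next
  case (exR R t n S A)
  then show ?case unfolding stuckE_def by (auto simp: GC_def)
qed (auto simp: stuckE_def shapeE_def GC_def HE_def atomic_or_bot_def is_atomic_def)

lemma nonuniform_example_E: "nonuniform_example {AllR, ExR, OrL, AllL}"
proof (rule nonuniform_exampleI[of GC "{#HE#}" treeE, OF _ _ treeE_cproof])
  show "\<not> der True UNIV n (insert (Neg GC) (set_mset {#HE#})) GC" for n
    using not_der_stuckE[of UNIV n "insert (Neg GC) (set_mset {#HE#})" GC]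
    by (auto simp: stuckE_def shapeE_def Neg_def)
qed (auto simp: single_succedents_def treeE_def goal_seq_def wff_def GC_def HE_def)

text \<open>\<open>\<longrightarrow> \<forall>x ((R x x \<or> R x k) \<supset> \<exists>y R x y)\<close>: the same, via \<open>\<supset>\<close>-R.\<close>

definition GF :: fm where
  "GF = All (Imp (Or (Ra (Bnd 0) (Bnd 0)) (Ra (Bnd 0) k)) (Ex (Ra (Bnd 1) (Bnd 0))))"

definition treeF :: ptree where
  "treeF =
    PT ({#Neg GF#}, {#GF#}) AllR [
     PT ({#Neg GF#}, {#Imp (Or (Ra c c) (Ra c k)) (Ex (Ra c (Bnd 0)))#}) ImpR [
      PT (add_mset (Or (Ra c c) (Ra c k)) {#Neg GF#}, {#Ex (Ra c (Bnd 0))#}) OrL [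
       PT (add_mset (Ra c c) {#Neg GF#}, {#Ex (Ra c (Bnd 0))#}) ExR [
        PT (add_mset (Ra c c) {#Neg GF#}, {#Ra c c#}) Axiom []],
       PT (add_mset (Ra c k) {#Neg GF#}, {#Ex (Ra c (Bnd 0))#}) ExR [
        PT (add_mset (Ra c k) {#Neg GF#}, {#Ra c k#}) Axiom []]]]]"

lemma treeF_cproof: "cproof treeF"
  unfolding treeF_def GF_def
  by (intro cproof_nodes)
    (auto simp: Neg_def consts_seq_def is_axiom_def is_atomic_def add_mset_commute)

definition shapeF :: "fm set \<Rightarrow> bool" where
  "shapeF S = (\<forall>F\<in>S. F = Imp GF Bot \<or> (\<exists>t. F = Or (Ra t t) (Ra t k)) \<or> (\<exists>p ts. F = Atom p ts))"
definition stuckF :: "fm set \<Rightarrow> fm \<Rightarrow> bool" where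
  "stuckF S C = (Imp GF Bot \<in> S \<and> shapeF S \<and> (C = GF \<or> C = Bot
   \<or> (\<exists>x. x \<noteq> 5 \<and> C = Imp (Or (Ra (Fn x []) (Fn x [])) (Ra (Fn x []) k)) (Ex (Ra (Fn x []) (Bnd 0)))
     \<and> (\<forall>v. Ra (Fn x []) v \<notin> S))
   \<or> (\<exists>x. x \<noteq> 5 \<and> C = Ex (Ra (Fn x []) (Bnd 0)) \<and> (\<forall>v. Ra (Fn x []) v \<notin> S))
   \<or> (\<exists>x v. x \<noteq> 5 \<and> C = Ra (Fn x []) v \<and> C \<notin> S)))"

lemma not_der_stuckF:
  assumes "der True R n S C" "stuckF S C"
  shows False
  using assms
proof (induction True R n S C rule: der.induct)
  case (orL R C A B S n)
  then obtain t where AB: "A = Ra t t" "B = Ra t k" unfolding stuckF_def shapeF_def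
    by (auto simp: GF_def)
  show ?case
  proof (cases "C = A")
    case True
    then have "C \<noteq> B" using orL AB unfolding stuckF_def by (auto simp: GF_def)
    then show ?thesis using orL AB unfolding stuckF_def shapeF_def
      by (auto simp: atomic_or_bot_def is_atomic_def GF_def)
  next
    case False
    then show ?thesis using orL AB unfolding stuckF_def shapeF_def
      by (auto simp: atomic_or_bot_def is_atomic_def)
  qed
next
  case (impL R C A B S n)
  then have "A = GF" unfolding stuckF_def shapeF_def by (auto simp: GF_def)
  then show ?case using impL unfolding stuckF_def shapeF_def by auto
next
  case (impR R n A S B)
  then show ?case unfolding stuckF_def shapeF_def by (auto simp: GF_def)
next
  case (allR R x S A n)
  then have "A = Imp (Or (Ra (Bnd 0) (Bnd 0)) (Ra (Bnd 0) k)) (Ex (Ra (Bnd 1) (Bnd 0)))"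
    unfolding stuckF_def by (auto simp: GF_def)
  moreover have "\<forall>v. Ra (Fn x []) v \<notin> S" using allR(2) consts_fm_subset_consts_fms by fastforce
  moreover have "x \<noteq> 5" using allR(2) consts_fm_subset_consts_fms[of "Imp GF Bot" S] allR(6)
    unfolding stuckF_def by (auto simp: GF_def)
  ultimately show ?case using allR unfolding stuckF_def by auto
next
  case (exR R t n S A)
  then show ?case unfolding stuckF_def by (auto simp: GF_def)
qed (auto simp: stuckF_def shapeF_def GF_def atomic_or_bot_def is_atomic_def)

lemma nonuniform_example_F: "nonuniform_example {AllR, ExR, OrL, ImpR}"
proof (rule nonuniform_exampleI[of GF "{#}" treeF, OF _ _ treeF_cproof])
  show "\<not> der True UNIV n (insert (Neg GF) (set_mset {#})) GF" for n
    using not_der_stuckF[of UNIV n "insert (Neg GF) (set_mset {#})" GF]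
    by (auto simp: stuckF_def shapeF_def Neg_def)
qed (auto simp: single_succedents_def treeF_def goal_seq_def wff_def GF_def)

theorem theorem10:
  shows "(\<forall>G \<Gamma> p. wff G \<and> (\<forall>A\<in>#\<Gamma>. wff A) \<and> iproof p \<and> root p = goal_seq G \<Gamma> \<and> restricted p
            \<longrightarrow> (\<exists>q. uproof q \<and> root q = goal_seq G \<Gamma>))
       \<and> (\<forall>Y\<in>{AllL, ImpR}. \<exists>G \<Gamma> p. wff G \<and> (\<forall>A\<in>#\<Gamma>. wff A) \<and> iproof p \<and> root p = goal_seq G \<Gamma>
            \<and> uses AllR p \<and> uses OrR p \<and> uses OrL p \<and> uses Y p
            \<and> \<not> (\<exists>q. uproof q \<and> root q = goal_seq G \<Gamma>))
       \<and> (\<forall>Y\<in>{AllL, ImpR}. \<forall>Z\<in>{OrL, ExL}. \<exists>G \<Gamma> p. wff G \<and> (\<forall>A\<in>#\<Gamma>. wff A) \<and> iproof p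
            \<and> root p = goal_seq G \<Gamma>
            \<and> uses AllR p \<and> uses ExR p \<and> uses Z p \<and> uses Y p
            \<and> \<not> (\<exists>q. uproof q \<and> root q = goal_seq G \<Gamma>))"
proof (intro conjI)
  show "\<forall>G \<Gamma> p. wff G \<and> (\<forall>A\<in>#\<Gamma>. wff A) \<and> iproof p \<and> root p = goal_seq G \<Gamma> \<and> restricted p
      \<longrightarrow> (\<exists>q. uproof q \<and> root q = goal_seq G \<Gamma>)"
    using uproof_if_restricted_iproof by blast
  show "\<forall>Y\<in>{AllL, ImpR}. \<exists>G \<Gamma> p. wff G \<and> (\<forall>A\<in>#\<Gamma>. wff A) \<and> iproof p \<and> root p = goal_seq G \<Gamma>
      \<and> uses AllR p \<and> uses OrR p \<and> uses OrL p \<and> uses Y p \<and> \<not> (\<exists>q. uproof q \<and> root q = goal_seq G \<Gamma>)"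
    using nonuniform_example_A nonuniform_example_B unfolding nonuniform_example_def by auto
  show "\<forall>Y\<in>{AllL, ImpR}. \<forall>Z\<in>{OrL, ExL}. \<exists>G \<Gamma> p. wff G \<and> (\<forall>A\<in>#\<Gamma>. wff A) \<and> iproof p
      \<and> root p = goal_seq G \<Gamma> \<and> uses AllR p \<and> uses ExR p \<and> uses Z p \<and> uses Y p
      \<and> \<not> (\<exists>q. uproof q \<and> root q = goal_seq G \<Gamma>)"
    using nonuniform_example_C nonuniform_example_D nonuniform_example_E nonuniform_example_F
    unfolding nonuniform_example_def by auto
qed

end
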